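(* Let $d\ge 2$ and $n\ge d+2$. Then the good locus $\mathrm{good}(L_{d,n})$ is path-connected (in the standard topology).
   Context: Let $N=\binom n2$, coordinates of $\mathbb C^N$ indexed by edges $\{i,j\}$ of $K_n$. For a complex configuration ${\bf p}$ of $n$ points in $\mathbb C^d$, $m({\bf p})$ has coordinates $m_{ij}=\sum_{k=1}^d({\bf p}_i^k-{\bf p}_j^k)^2$ (no conjugation); $M_{d,n}$ is the image of $m$; $s$ is the coordinatewise squaring map on $\mathbb C^N$ and $L_{d,n}=s^{-1}(M_{d,n})$. Let $Z\subset\mathbb C^N$ be the set of points with at least one zero coordinate. The bad locus of $M_{d,n}$ is $\mathrm{sing}(M_{d,n})\cup(M_{d,n}\cap Z)$ (with $\mathrm{sing}$ the algebraic singular locus); the bad locus of $L_{d,n}$ is its preimage under $s$, and $\mathrm{good}(L_{d,n})$ is the complement of the bad locus in $L_{d,n}$. *)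

theory Defs
  imports "HOL-Analysis.Analysis"
begin

text \<open>The index set of the n points is a finite type 'n (n = CARD('n)),
 the ambient dimension is a finite type 'd (d = CARD('d)).
 C^N (coordinates indexed by edges {i,j} of K_n) is realised as the linear subspace
 of symmetric complex 'n x 'n matrices with zero diagonal; the coordinate of the edge
 {i,j} is x$i$j = x$j$i.\<close>

definition edge_space :: "(complex^'n^'n) set" where
  "edge_space = {x. \<forall>i j. x$i$j = x$j$i \<and> x$i$i = 0}"

definition meas :: "complex^'d^'n \<Rightarrow> complex^'n^'n" where
  "meas p = (\<chi> i j. \<Sum>k\<in>UNIV. (p$i$k - p$j$k)^2)"

definition M_set :: "('d::finite) itself \<Rightarrow> (complex^'n^'n) set" where
  "M_set _ = range (meas :: complex^'d^'n \<Rightarrow> complex^'n^'n)"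

definition sq_map :: "complex^'n^'n \<Rightarrow> complex^'n^'n" where
  "sq_map x = (\<chi> i j. (x$i$j)^2)"

definition L_set :: "('d::finite) itself \<Rightarrow> (complex^'n^'n) set" where
  "L_set D = {x \<in> edge_space. sq_map x \<in> M_set D}"

definition Z_set :: "(complex^'n^'n) set" where
  "Z_set = {x. \<exists>i j. i \<noteq> j \<and> x$i$j = 0}"

inductive_set poly_fun :: "(complex^'n^'n \<Rightarrow> complex) set" where
  const: "(\<lambda>x. c) \<in> poly_fun"
| coord: "(\<lambda>x. x$i$j) \<in> poly_fun"
| add: "f \<in> poly_fun \<Longrightarrow> g \<in> poly_fun \<Longrightarrow> (\<lambda>x. f x + g x) \<in> poly_fun"
| mult: "f \<in> poly_fun \<Longrightarrow> g \<in> poly_fun \<Longrightarrow> (\<lambda>x. f x * g x) \<in> poly_fun"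

text \<open>Vanishing ideal, Zariski tangent space, dimension, and the singular locus
 (Jacobian / tangent space criterion: x is singular iff dim T_x V > dim V, where
 dim V is the minimal tangent space dimension, which for an irreducible variety
 such as M_{d,n} is its dimension).  Dimensions are real dimensions, i.e. twice the
 complex dimensions, which does not affect the comparison.\<close>
definition vanishing_ideal :: "(complex^'n^'n) set \<Rightarrow> (complex^'n^'n \<Rightarrow> complex) set" where
  "vanishing_ideal V = {f \<in> poly_fun. \<forall>x\<in>V. f x = 0}"

definition zariski_tangent :: "(complex^'n^'n) set \<Rightarrow> complex^'n^'n \<Rightarrow> (complex^'n^'n) set" where
  "zariski_tangent V x = {v. \<forall>f \<in> vanishing_ideal V. frechet_derivative f (at x) v = 0}"

definition var_dim :: "(complex^'n^'n) set \<Rightarrow> nat" where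
  "var_dim V = (LEAST k. \<exists>y\<in>V. dim (zariski_tangent V y) = k)"

definition sing_locus :: "(complex^'n^'n) set \<Rightarrow> (complex^'n^'n) set" where
  "sing_locus V = {x \<in> V. dim (zariski_tangent V x) > var_dim V}"

definition bad_M :: "('d::finite) itself \<Rightarrow> (complex^'n^'n) set" where
  "bad_M D = sing_locus (M_set D) \<union> (M_set D \<inter> Z_set)"

definition bad_L :: "('d::finite) itself \<Rightarrow> (complex^'n^'n) set" where
  "bad_L D = {x \<in> L_set D. sq_map x \<in> bad_M D}"

definition good_L :: "('d::finite) itself \<Rightarrow> (complex^'n^'n) set" where
  "good_L D = L_set D - bad_L D"

end

(*
  A configuration p whose points affinely span C^d gives a smooth point meas p of M: an invertible
  affine map with rows summing to one acts on squared distances by a linear automorphism of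
  C^N preserving M, so all such points have the same tangent dimension, and since every point
  of M is a limit of them, upper semicontinuity makes this dimension the minimal one.

  The spanning configurations without vanishing edge lengths form the complement of a
  hypersurface in C^(n d), hence a path-connected set, and paths in it lift through the
  squaring map s into good(L). Every good point can be pushed into such a lift, and two lifts of
  the same configuration differ only in signs of coordinates. Each single sign can be flipped
  within good(L) once n >= d + 2: there is a loop of spanning configurations along which one
  squared edge length winds once around 0 while all others keep positive real part, and its
  lift runs from x to x with that one coordinate negated.
*)

theory Submission
  imports Defs "HOL-Computational_Algebra.Polynomial"
begin

section \<open>Polynomial functions and Zariski tangent spaces\<close>

lemma poly_fun_diff: "f \<in> poly_fun \<Longrightarrow> g \<in> poly_fun \<Longrightarrow> (\<lambda>x. f x - g x) \<in> poly_fun"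
  using poly_fun.add[OF _ poly_fun.mult[OF poly_fun.const[of "-1"]], of f g] by simp

lemma poly_fun_sum:
  "finite A \<Longrightarrow> (\<And>a. a \<in> A \<Longrightarrow> f a \<in> poly_fun) \<Longrightarrow> (\<lambda>x. \<Sum>a\<in>A. f a x) \<in> poly_fun"
  by (induction A rule: finite_induct) (auto intro: poly_fun.add poly_fun.mult poly_fun.const)

lemma poly_fun_compose:
  assumes "f \<in> poly_fun" "\<And>i j. (\<lambda>x. \<Phi> x $i$j) \<in> poly_fun"
  shows "(\<lambda>x. f (\<Phi> x)) \<in> poly_fun"
  using assms by (induction rule: poly_fun.induct) (auto intro: poly_fun.add poly_fun.mult poly_fun.const)

lemma continuous_on_poly_fun: "f \<in> poly_fun \<Longrightarrow> continuous_on S f"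
  by (induction rule: poly_fun.induct) (auto intro!: continuous_intros)

lemma poly_fun_has_poly_derivative:
  assumes "f \<in> poly_fun"
  shows "\<exists>D. (\<forall>x. (f has_derivative D x) (at x)) \<and> (\<forall>v. (\<lambda>x. D x v) \<in> poly_fun)"
  using assms
proof (induction rule: poly_fun.induct)
  case (const c)
  show ?case by (intro exI[of _ "\<lambda>x v. 0"]) (auto intro: poly_fun.const)
next
  case (coord i j)
  have "((\<lambda>x::complex^'a^'a. x$i$j) has_derivative (\<lambda>v. v$i$j)) (at x)" for x
    by (intro bounded_linear_imp_has_derivative bounded_linear_compose[OF bounded_linear_vec_nth]
        bounded_linear_vec_nth)
  then show ?case by (intro exI[of _ "\<lambda>x v. v$i$j"]) (auto intro: poly_fun.const)
next
  case (add f g)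
  then obtain Df Dg where "\<forall>x. (f has_derivative Df x) (at x)" "\<forall>v. (\<lambda>x. Df x v) \<in> poly_fun"
    "\<forall>x. (g has_derivative Dg x) (at x)" "\<forall>v. (\<lambda>x. Dg x v) \<in> poly_fun" by blast
  then show ?case
    by (intro exI[of _ "\<lambda>x v. Df x v + Dg x v"]) (auto intro!: derivative_intros poly_fun.add)
next
  case (mult f g)
  then obtain Df Dg where "\<forall>x. (f has_derivative Df x) (at x)" "\<forall>v. (\<lambda>x. Df x v) \<in> poly_fun"
    "\<forall>x. (g has_derivative Dg x) (at x)" "\<forall>v. (\<lambda>x. Dg x v) \<in> poly_fun" by blast
  then show ?case
    by (intro exI[of _ "\<lambda>x v. f x * Dg x v + Df x v * g x"])
      (auto intro!: derivative_intros poly_fun.add poly_fun.mult mult.hyps)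
qed

lemma
  assumes "f \<in> poly_fun"
  shows has_derivative_poly_fun: "(f has_derivative frechet_derivative f (at x)) (at x)"
    and poly_fun_frechet_derivative: "(\<lambda>y. frechet_derivative f (at y) v) \<in> poly_fun"
proof -
  obtain D where D: "\<forall>x. (f has_derivative D x) (at x)" "\<forall>v. (\<lambda>x. D x v) \<in> poly_fun"
    using poly_fun_has_poly_derivative[OF assms] by blast
  have "frechet_derivative f (at y) = D y" for y
    using frechet_derivative_at D(1) by metis
  then show "(f has_derivative frechet_derivative f (at x)) (at x)"
    and "(\<lambda>y. frechet_derivative f (at y) v) \<in> poly_fun"
    using D by simp_all
qed

lemma linear_frechet_derivative_poly_fun: "f \<in> poly_fun \<Longrightarrow> linear (frechet_derivative f (at x))"
  using has_derivative_linear has_derivative_poly_fun by blast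

lemma tendsto_frechet_derivative_poly_fun:
  assumes f: "f \<in> poly_fun" and y: "y \<longlonglongrightarrow> z" and w: "w \<longlonglongrightarrow> w0"
  shows "(\<lambda>n. frechet_derivative f (at (y n)) (w n)) \<longlonglongrightarrow> frechet_derivative f (at z) w0"
proof -
  have expand: "frechet_derivative f (at x) v = (\<Sum>b\<in>Basis. (v \<bullet> b) *\<^sub>R frechet_derivative f (at x) b)"
    for x v
  proof -
    have lin: "linear (frechet_derivative f (at x))" by (rule linear_frechet_derivative_poly_fun[OF f])
    have "frechet_derivative f (at x) v = frechet_derivative f (at x) (\<Sum>b\<in>Basis. (v \<bullet> b) *\<^sub>R b)"
      by (simp only: euclidean_representation)
    also have "\<dots> = (\<Sum>b\<in>Basis. (v \<bullet> b) *\<^sub>R frechet_derivative f (at x) b)"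
      by (simp only: linear_sum[OF lin] linear_scale[OF lin])
    finally show ?thesis .
  qed
  have "(\<lambda>n. frechet_derivative f (at (y n)) b) \<longlonglongrightarrow> frechet_derivative f (at z) b" for b
  proof -
    have "isCont (\<lambda>x. frechet_derivative f (at x) b) z"
      using continuous_on_poly_fun[OF poly_fun_frechet_derivative[OF f], of UNIV b]
      by (simp add: continuous_on_eq_continuous_at)
    then show ?thesis using isCont_tendsto_compose y by blast
  qed
  then have "(\<lambda>n. \<Sum>b\<in>Basis. (w n \<bullet> b) *\<^sub>R frechet_derivative f (at (y n)) b)
      \<longlonglongrightarrow> (\<Sum>b\<in>Basis. (w0 \<bullet> b) *\<^sub>R frechet_derivative f (at z) b)"
    by (intro tendsto_sum tendsto_scaleR tendsto_inner w tendsto_const)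
  then show ?thesis by (simp only: expand[symmetric])
qed

lemma vanishing_ideal_poly_fun: "f \<in> vanishing_ideal V \<Longrightarrow> f \<in> poly_fun"
  by (simp add: vanishing_ideal_def)

lemma subspace_zariski_tangent: "subspace (zariski_tangent V x)"
proof -
  have "linear (frechet_derivative f (at x))" if "f \<in> vanishing_ideal V" for f
    using linear_frechet_derivative_poly_fun[OF vanishing_ideal_poly_fun[OF that]] .
  then show ?thesis
    unfolding subspace_def zariski_tangent_def by (auto simp: linear_add linear_scale linear_0)
qed

lemma zariski_tangent_image_subset:
  assumes lin: "linear \<Phi>" and poly: "\<And>i j. (\<lambda>x. \<Phi> x $i$j) \<in> poly_fun" and inv: "\<Phi> ` V \<subseteq> V"
  shows "\<Phi> ` zariski_tangent V z \<subseteq> zariski_tangent V (\<Phi> z)"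
proof (clarsimp simp: zariski_tangent_def)
  fix v f assume v: "\<forall>g\<in>vanishing_ideal V. frechet_derivative g (at z) v = 0"
    and f: "f \<in> vanishing_ideal V"
  have fp: "f \<in> poly_fun" using vanishing_ideal_poly_fun[OF f] .
  have "(\<lambda>x. f (\<Phi> x)) \<in> vanishing_ideal V"
    using f inv poly_fun_compose[OF fp poly] by (auto simp: vanishing_ideal_def)
  then have "frechet_derivative (\<lambda>x. f (\<Phi> x)) (at z) v = 0" using v by blast
  moreover have "((\<lambda>x. f (\<Phi> x)) has_derivative (\<lambda>v. frechet_derivative f (at (\<Phi> z)) (\<Phi> v))) (at z)"
    using has_derivative_compose[OF linear_imp_has_derivative[OF lin] has_derivative_poly_fun[OF fp]] .
  ultimately show "frechet_derivative f (at (\<Phi> z)) (\<Phi> v) = 0"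
    using frechet_derivative_at by metis
qed

lemma dim_zariski_tangent_le_image:
  assumes lin: "linear \<Phi>" and poly: "\<And>i j. (\<lambda>x. \<Phi> x $i$j) \<in> poly_fun" and inv: "\<Phi> ` V \<subseteq> V"
    and inj: "inj_on \<Phi> (zariski_tangent V z)"
  shows "dim (zariski_tangent V z) \<le> dim (zariski_tangent V (\<Phi> z))"
proof -
  have "dim (\<Phi> ` zariski_tangent V z) = dim (zariski_tangent V z)"
    using dim_image_eq[OF lin] inj subspace_zariski_tangent span_eq_iff by metis
  then show ?thesis using zariski_tangent_image_subset[OF assms(1-3)] dim_subset by metis
qed

lemma zariski_tangent_limit:
  assumes y: "y \<longlonglongrightarrow> z" and w: "w \<longlonglongrightarrow> w0" and T: "\<And>n. w n \<in> zariski_tangent V (y n)"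
  shows "w0 \<in> zariski_tangent V z"
  unfolding zariski_tangent_def
proof (intro CollectI ballI)
  fix f assume f: "f \<in> vanishing_ideal V"
  have "(\<lambda>n. frechet_derivative f (at (y n)) (w n)) \<longlonglongrightarrow> frechet_derivative f (at z) w0"
    by (rule tendsto_frechet_derivative_poly_fun[OF vanishing_ideal_poly_fun[OF f] y w])
  moreover have "frechet_derivative f (at (y n)) (w n) = 0" for n
    using T[of n] f by (auto simp: zariski_tangent_def)
  ultimately show "frechet_derivative f (at z) w0 = 0" by (simp add: LIMSEQ_const_iff)
qed

lemma exists_unit_orthogonal_if_dim_less:
  fixes A B :: "'a::euclidean_space set"
  assumes "subspace A" "subspace B" "dim B < dim A"
  obtains w where "w \<in> A" "norm w = 1" "\<And>x. x \<in> B \<Longrightarrow> orthogonal x w"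
proof -
  define W where "W = {y. \<forall>x\<in>B. orthogonal x y}"
  have sW: "subspace W" unfolding W_def orthogonal_def
    by (auto simp: subspace_def inner_add_right)
  have "dim W + dim B = DIM('a)"
    using dim_subspace_orthogonal_to_vectors[OF assms(2) subspace_UNIV] unfolding W_def
    by (simp add: dim_UNIV)
  moreover have "dim {x + y |x y. x \<in> A \<and> y \<in> W} + dim (A \<inter> W) = dim A + dim W"
    by (rule dim_sums_Int[OF assms(1) sW])
  moreover have "dim {x + y |x y. x \<in> A \<and> y \<in> W} \<le> DIM('a)"
    by (rule dim_subset_UNIV)
  ultimately have "dim (A \<inter> W) > 0" using assms(3) by linarith
  then have "\<not> A \<inter> W \<subseteq> {0}" using dim_eq_0 by (metis neq0_conv)
  then obtain w where w: "w \<in> A \<inter> W" "w \<noteq> 0" by blast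
  show ?thesis
  proof
    show "w /\<^sub>R norm w \<in> A" using w assms(1) by (simp add: subspace_scale)
    show "norm (w /\<^sub>R norm w) = 1" using w by simp
    show "orthogonal x (w /\<^sub>R norm w)" if "x \<in> B" for x
      using w that unfolding W_def orthogonal_def by simp
  qed
qed

lemma dim_zariski_tangent_limit:
  assumes y: "y \<longlonglongrightarrow> z" and k: "\<And>n. k \<le> dim (zariski_tangent V (y n))"
  shows "k \<le> dim (zariski_tangent V z)"
proof (rule ccontr)
  assume less: "\<not> ?thesis"
  have "\<exists>w. w \<in> zariski_tangent V (y n) \<and> norm w = 1 \<and> (\<forall>x\<in>zariski_tangent V z. orthogonal x w)"
    for n
  proof -
    have "dim (zariski_tangent V z) < dim (zariski_tangent V (y n))"
      using less k[of n] by linarith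
    then obtain w where "w \<in> zariski_tangent V (y n)" "norm w = 1"
      "\<And>x. x \<in> zariski_tangent V z \<Longrightarrow> orthogonal x w"
      using exists_unit_orthogonal_if_dim_less[OF subspace_zariski_tangent subspace_zariski_tangent]
      by blast
    then show ?thesis by blast
  qed
  then obtain w where w: "\<And>n. w n \<in> zariski_tangent V (y n)" "\<And>n. norm (w n) = 1"
      "\<And>n x. x \<in> zariski_tangent V z \<Longrightarrow> orthogonal x (w n)"
    by metis
  have "seq_compact (sphere (0::complex^'n^'n) 1)" by (intro compact_imp_seq_compact compact_sphere)
  moreover have "\<forall>n. w n \<in> sphere 0 1" using w(2) by simp
  ultimately obtain w0 r where "w0 \<in> sphere 0 1" "strict_mono r" "(w \<circ> r) \<longlonglongrightarrow> w0"
    using seq_compactE by metis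
  moreover have "w0 \<in> zariski_tangent V z"
    using zariski_tangent_limit[OF LIMSEQ_subseq_LIMSEQ[OF y \<open>strict_mono r\<close>] \<open>(w \<circ> r) \<longlonglongrightarrow> w0\<close>] w(1)
    by simp
  moreover have "orthogonal x w0" if "x \<in> zariski_tangent V z" for x
  proof -
    have "(\<lambda>n. x \<bullet> (w \<circ> r) n) \<longlonglongrightarrow> x \<bullet> w0"
      by (intro tendsto_inner tendsto_const \<open>(w \<circ> r) \<longlonglongrightarrow> w0\<close>)
    then show ?thesis using w(3)[OF that] by (simp add: orthogonal_def LIMSEQ_const_iff)
  qed
  ultimately have "orthogonal w0 w0" by blast
  then show False using \<open>w0 \<in> sphere 0 1\<close> by (simp add: orthogonal_def)
qed

lemma poly_fun_divide: "f \<in> poly_fun \<Longrightarrow> (\<lambda>x. f x / c) \<in> poly_fun"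
  using poly_fun.mult[OF _ poly_fun.const[of "1/c"]] by simp

section \<open>Affine maps act linearly on squared distances\<close>

text \<open>On measurements of a configuration p, gram_at b is the law of cosines: it gives the Gram
  matrix of p translated so that its point b sits at the origin, while dist_of_gram recovers
  squared distances from a Gram matrix. Conjugating by a matrix B whose rows sum to one thus
  realises the affine map p \<mapsto> B ** p on squared distances.\<close>

definition gram_at :: "'n \<Rightarrow> complex^'n^'n \<Rightarrow> complex^'n^'n" where
  "gram_at b x = (\<chi> k l. (x$b$k + x$b$l - x$k$l) / 2)"

definition dist_of_gram :: "complex^'n^'n \<Rightarrow> complex^'n^'n" where
  "dist_of_gram G = (\<chi> k l. G$k$k + G$l$l - G$k$l - G$l$k)"

definition affine_push :: "'n \<Rightarrow> complex^'n^'n \<Rightarrow> complex^'n^'n \<Rightarrow> complex^'n^'n" where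
  "affine_push b B x = dist_of_gram (B ** gram_at b x ** transpose B)"

definition outer_sum :: "complex^'n \<Rightarrow> complex^'n^'n" where
  "outer_sum c = (\<chi> k l. c$k + c$l)"

lemma gram_at_meas:
  "gram_at b (meas p) = (\<chi> k m. p$k$m - p$b$m) ** transpose (\<chi> k m. p$k$m - p$b$m)"
proof -
  have "(meas p $b$k + meas p $b$l - meas p $k$l) / 2
      = (\<Sum>m\<in>UNIV. (p$k$m - p$b$m) * (p$l$m - p$b$m))" for k l
  proof -
    have "(meas p $b$k + meas p $b$l - meas p $k$l) / 2
       = (\<Sum>m\<in>UNIV. ((p$b$m - p$k$m)^2 + (p$b$m - p$l$m)^2 - (p$k$m - p$l$m)^2)) / 2"
      by (simp add: meas_def sum.distrib sum_subtractf)
    also have "\<dots> = (\<Sum>m\<in>UNIV. ((p$b$m - p$k$m)^2 + (p$b$m - p$l$m)^2 - (p$k$m - p$l$m)^2) / 2)"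
      by (rule sum_divide_distrib)
    also have "\<dots> = (\<Sum>m\<in>UNIV. (p$k$m - p$b$m) * (p$l$m - p$b$m))"
      by (rule sum.cong) (auto simp: power2_eq_square field_simps)
    finally show ?thesis .
  qed
  then show ?thesis
    by (simp add: gram_at_def matrix_matrix_mult_def transpose_def vec_eq_iff)
qed

lemma dist_of_gram_gram: "dist_of_gram (V ** transpose V) = meas V"
proof -
  have "(\<Sum>m\<in>UNIV. V$k$m * V$k$m) + (\<Sum>m\<in>UNIV. V$l$m * V$l$m) - (\<Sum>m\<in>UNIV. V$k$m * V$l$m)
      - (\<Sum>m\<in>UNIV. V$l$m * V$k$m) = (\<Sum>m\<in>UNIV. (V$k$m - V$l$m)^2)" for k l
    by (simp add: sum.distrib[symmetric] sum_subtractf[symmetric] power2_eq_square algebra_simps)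
  then show ?thesis
    by (simp add: dist_of_gram_def matrix_matrix_mult_def transpose_def meas_def vec_eq_iff)
qed

lemma meas_translate: "meas (\<chi> k m. V$k$m - c$m) = meas V"
  by (simp add: meas_def vec_eq_iff)

lemma matrix_mult_translate:
  fixes B :: "'a::comm_ring_1^'n^'n"
  assumes "B *v 1 = 1"
  shows "B ** (\<chi> k m. p$k$m - p$b$m) = (\<chi> k m. (B ** p)$k$m - p$b$m)"
proof -
  have rows: "(\<Sum>l\<in>UNIV. B$k$l) = 1" for k
    using arg_cong[OF assms, of "\<lambda>v. v$k"] by (simp add: matrix_vector_mult_def)
  have "(\<Sum>l\<in>UNIV. B$k$l * (p$l$m - p$b$m)) = (\<Sum>l\<in>UNIV. B$k$l * p$l$m) - (\<Sum>l\<in>UNIV. B$k$l) * p$b$m"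
    for k m
  proof -
    have "(\<Sum>l\<in>UNIV. B$k$l * (p$l$m - p$b$m)) = (\<Sum>l\<in>UNIV. B$k$l * p$l$m - B$k$l * p$b$m)"
      by (simp add: right_diff_distrib)
    then show ?thesis by (simp add: sum_subtractf sum_distrib_right)
  qed
  then show ?thesis by (simp add: matrix_matrix_mult_def vec_eq_iff rows)
qed

lemma affine_push_meas:
  assumes "B *v 1 = 1"
  shows "affine_push b B (meas p) = meas (B ** p)"
proof -
  define P where "P = (\<chi> k m. p$k$m - p$b$m)"
  have "B ** (P ** transpose P) ** transpose B = (B ** P) ** transpose (B ** P)"
    by (simp add: matrix_mul_assoc matrix_transpose_mul)
  then show ?thesis
    by (simp add: affine_push_def gram_at_meas dist_of_gram_gram P_def matrix_mult_translate[OF assms]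
        meas_translate)
qed

lemma affine_push_M_set: "B *v 1 = 1 \<Longrightarrow> affine_push b B ` M_set D \<subseteq> M_set D"
  by (auto simp: M_set_def affine_push_meas)

lemma poly_fun_affine_push: "(\<lambda>x. affine_push b B x $k$l) \<in> poly_fun"
  unfolding affine_push_def dist_of_gram_def gram_at_def matrix_matrix_mult_def transpose_def
  by (simp, intro poly_fun_diff poly_fun.add poly_fun_sum poly_fun.mult poly_fun.const
      poly_fun_divide poly_fun.coord finite)

lemma linear_congruence: "linear (\<lambda>G::complex^'n^'n. B ** G ** transpose B)"
  by (rule linearI) (simp_all add: matrix_add_ldistrib matrix_scalar_ac scalar_matrix_assoc,
      simp add: matrix_matrix_mult_def vec_eq_iff sum.distrib distrib_right)

lemma linear_affine_push: "linear (affine_push b B)"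
proof -
  have "linear (gram_at b)" "linear dist_of_gram"
    by (rule linearI; simp add: gram_at_def dist_of_gram_def vec_eq_iff
        scaleR_conv_of_real[where 'a=complex] field_simps)+
  then show ?thesis
    using linear_compose[OF linear_compose[OF _ linear_congruence]]
    unfolding affine_push_def o_def by blast
qed

lemma dist_of_gram_gram_at: "x \<in> edge_space \<Longrightarrow> dist_of_gram (gram_at b x) = x"
  by (auto simp: edge_space_def dist_of_gram_def gram_at_def vec_eq_iff field_simps)

lemma gram_at_dist_of_gram:
  "transpose G = G \<Longrightarrow> gram_at b (dist_of_gram G) = G - outer_sum (\<chi> k. G$b$k - G$b$b / 2)"
  by (auto simp: transpose_def dist_of_gram_def gram_at_def outer_sum_def vec_eq_iff field_simps)

lemma dist_of_gram_outer_sum: "dist_of_gram (outer_sum c) = 0"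
  by (simp add: dist_of_gram_def outer_sum_def vec_eq_iff)

lemma dist_of_gram_diff: "dist_of_gram (G - H) = dist_of_gram G - dist_of_gram H"
  by (simp add: dist_of_gram_def vec_eq_iff)

lemma transpose_gram_at: "x \<in> edge_space \<Longrightarrow> transpose (gram_at b x) = gram_at b x"
  by (auto simp: edge_space_def transpose_def gram_at_def vec_eq_iff)

lemma congruence_outer_sum:
  fixes C :: "complex^'n^'n"
  assumes "C *v 1 = 1"
  shows "C ** outer_sum c ** transpose C = outer_sum (C *v c)"
proof -
  have rows: "(\<Sum>l\<in>UNIV. C$k$l) = 1" for k
    using arg_cong[OF assms, of "\<lambda>v. v$k"] by (simp add: matrix_vector_mult_def)
  have affine_row: "(\<Sum>r\<in>UNIV. C$k$r * (f r + e)) = (\<Sum>r\<in>UNIV. C$k$r * f r) + e"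
    "(\<Sum>r\<in>UNIV. (e + f r) * C$k$r) = e + (\<Sum>r\<in>UNIV. f r * C$k$r)" for k e f
    by (simp_all add: distrib_left distrib_right sum.distrib rows flip: sum_distrib_right sum_distrib_left)
  have "(\<Sum>s\<in>UNIV. (\<Sum>r\<in>UNIV. C$k$r * (c$r + c$s)) * C$l$s)
      = (\<Sum>r\<in>UNIV. C$k$r * c$r) + (\<Sum>s\<in>UNIV. C$l$s * c$s)" for k l
    by (simp only: affine_row) (simp add: mult.commute)
  then show ?thesis
    by (simp add: matrix_matrix_mult_def transpose_def outer_sum_def matrix_vector_mult_def vec_eq_iff)
qed

lemma affine_push_inverse:
  fixes B C :: "complex^'n^'n"
  assumes B: "B *v 1 = 1" and CB: "C ** B = mat 1" and x: "x \<in> edge_space"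
  shows "affine_push b C (affine_push b B x) = x"
proof -
  have C: "C *v 1 = 1" using B CB by (metis matrix_vector_mul_assoc matrix_vector_mul_lid)
  define H where "H = B ** gram_at b x ** transpose B"
  define v where "v = (\<chi> k. H$b$k - H$b$b / 2)"
  have "transpose H = H"
    using transpose_gram_at[OF x] by (simp add: H_def matrix_transpose_mul matrix_mul_assoc)
  then have "affine_push b C (affine_push b B x) = dist_of_gram (C ** (H - outer_sum v) ** transpose C)"
    by (simp add: affine_push_def H_def v_def gram_at_dist_of_gram)
  also have "C ** (H - outer_sum v) ** transpose C = C ** H ** transpose C - outer_sum (C *v v)"
    using linear_diff[OF linear_congruence, of C H "outer_sum v"] congruence_outer_sum[OF C] by simp
  also have "C ** H ** transpose C = (C ** B) ** gram_at b x ** transpose (C ** B)"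
    by (simp add: H_def matrix_mul_assoc matrix_transpose_mul)
  finally show ?thesis
    by (simp add: CB dist_of_gram_diff dist_of_gram_outer_sum dist_of_gram_gram_at[OF x])
qed

section \<open>Functions that are polynomial along lines\<close>

definition line :: "complex^'d^'n \<Rightarrow> complex^'d^'n \<Rightarrow> complex \<Rightarrow> complex^'d^'n" where
  "line p v t = (\<chi> k m. p$k$m + t * v$k$m)"

definition polynomial_on_lines :: "(complex^'d^'n \<Rightarrow> complex) \<Rightarrow> bool" where
  "polynomial_on_lines F \<longleftrightarrow> (\<forall>p v. \<exists>c. \<forall>t. F (line p v t) = poly c t)"

lemma line_0 [simp]: "line p v 0 = p"
  by (simp add: line_def vec_eq_iff)

lemma line_1 [simp]: "line p (q - p) 1 = q"
  by (simp add: line_def vec_eq_iff)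

lemma continuous_on_line: "continuous_on S (line p v)"
  unfolding line_def by (intro continuous_intros)

lemma polynomial_on_lines_const: "polynomial_on_lines (\<lambda>p. a)"
  unfolding polynomial_on_lines_def by (intro allI exI[of _ "[:a:]"]) simp

lemma polynomial_on_lines_coord: "polynomial_on_lines (\<lambda>p. p$k$m)"
  unfolding polynomial_on_lines_def line_def
  by (intro allI, rename_tac p v, rule_tac x="[:p$k$m, v$k$m:]" in exI) simp

lemma polynomial_on_lines_add:
  "polynomial_on_lines F \<Longrightarrow> polynomial_on_lines G \<Longrightarrow> polynomial_on_lines (\<lambda>p. F p + G p)"
  unfolding polynomial_on_lines_def by (metis poly_add)

lemma polynomial_on_lines_mult:
  "polynomial_on_lines F \<Longrightarrow> polynomial_on_lines G \<Longrightarrow> polynomial_on_lines (\<lambda>p. F p * G p)"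
  unfolding polynomial_on_lines_def by (metis poly_mult)

lemma polynomial_on_lines_diff:
  "polynomial_on_lines F \<Longrightarrow> polynomial_on_lines G \<Longrightarrow> polynomial_on_lines (\<lambda>p. F p - G p)"
  unfolding polynomial_on_lines_def by (metis poly_diff)

lemma polynomial_on_lines_sum:
  "finite A \<Longrightarrow> (\<And>a. a \<in> A \<Longrightarrow> polynomial_on_lines (F a)) \<Longrightarrow>
    polynomial_on_lines (\<lambda>p. \<Sum>a\<in>A. F a p)"
  by (induction A rule: finite_induct) (auto intro: polynomial_on_lines_add polynomial_on_lines_const)

lemma polynomial_on_lines_prod:
  "finite A \<Longrightarrow> (\<And>a. a \<in> A \<Longrightarrow> polynomial_on_lines (F a)) \<Longrightarrow>
    polynomial_on_lines (\<lambda>p. \<Prod>a\<in>A. F a p)"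
  by (induction A rule: finite_induct) (auto intro: polynomial_on_lines_mult polynomial_on_lines_const)

lemma polynomial_on_lines_nonzero:
  assumes "polynomial_on_lines F" "F (line p v t0) \<noteq> 0"
  obtains c where "\<And>t. F (line p v t) = poly c t" "c \<noteq> 0"
  using assms unfolding polynomial_on_lines_def by (metis poly_0)

lemma path_component_nonzero_polynomial_on_lines:
  assumes F: "polynomial_on_lines F" and p: "F p \<noteq> 0" and q: "F q \<noteq> 0"
  shows "path_component {r. F r \<noteq> 0} p q"
proof -
  obtain c where c: "\<And>t. F (line p (q - p) t) = poly c t" "c \<noteq> 0"
    using polynomial_on_lines_nonzero[OF F, of p "q - p" 0] p by auto
  define R where "R = {t. poly c t = 0}"
  have "countable R" unfolding R_def using poly_roots_finite[OF c(2)] by (rule countable_finite)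
  then have "path_connected (- R)"
    by (intro path_connected_complement_countable) auto
  moreover have "0 \<in> - R" "1 \<in> - R" using p q c(1)[of 0] c(1)[of 1] by (auto simp: R_def)
  ultimately obtain h where h: "path h" "path_image h \<subseteq> - R" "pathstart h = 0" "pathfinish h = 1"
    unfolding path_connected_def by blast
  have "path (line p (q - p) \<circ> h)" using h(1) by (intro path_continuous_image continuous_on_line)
  moreover have "path_image (line p (q - p) \<circ> h) \<subseteq> {r. F r \<noteq> 0}"
    using h(2) c(1) by (auto simp: path_image_def R_def)
  ultimately show ?thesis
    unfolding path_component_def using h(3,4) by (auto simp: pathstart_def pathfinish_def)
qed

lemma polynomial_on_lines_common_nonzero:
  assumes F: "polynomial_on_lines F" and G: "polynomial_on_lines G"
    and "F (line p v t1) \<noteq> 0" "G (line p v t2) \<noteq> 0"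
  obtains t where "F (line p v t) \<noteq> 0" "G (line p v t) \<noteq> 0"
proof -
  obtain c where c: "\<And>t. F (line p v t) = poly c t" "c \<noteq> 0"
    using polynomial_on_lines_nonzero[OF F] assms(3) by metis
  obtain d where d: "\<And>t. G (line p v t) = poly d t" "d \<noteq> 0"
    using polynomial_on_lines_nonzero[OF G] assms(4) by metis
  have "finite {t. poly (c * d) t = 0}" using c d by (intro poly_roots_finite) simp
  then have "{t. poly (c * d) t = 0} \<noteq> UNIV" by (metis infinite_UNIV_char_0)
  then obtain t where "poly (c * d) t \<noteq> 0" by blast
  then show ?thesis using c d that by auto
qed

lemma eventually_nonzero_polynomial_on_lines:
  assumes F: "polynomial_on_lines F" and nz: "F (line p v t0) \<noteq> 0"
  shows "\<forall>\<^sub>F s in at_right 0. F (line p v (of_real s)) \<noteq> 0"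
proof -
  obtain c where c: "\<And>t. F (line p v t) = poly c t" "c \<noteq> 0"
    using polynomial_on_lines_nonzero[OF F] nz by metis
  define A where "A = insert 1 {s::real. s > 0 \<and> poly c (of_real s) = 0}"
  have "finite (of_real -` {t. poly c t = 0} :: real set)"
    using poly_roots_finite[OF c(2)] by (rule finite_vimageI) (simp add: inj_on_def)
  moreover have "{s::real. s > 0 \<and> poly c (of_real s) = 0} \<subseteq> of_real -` {t. poly c t = 0}" by auto
  ultimately have A: "finite A" "A \<noteq> {}" unfolding A_def by (auto intro: finite_subset)
  have "Min A > 0" using A by (simp add: Min_gr_iff A_def)
  moreover have "F (line p v (of_real s)) \<noteq> 0" if "0 < s" "s < Min A" for s
  proof
    assume "F (line p v (of_real s)) = 0"
    then have "s \<in> A" using that(1) c(1) by (simp add: A_def)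
    then show False using Min_le[OF A(1)] that(2) by fastforce
  qed
  ultimately show ?thesis unfolding eventually_at_right_field by blast
qed

lemma closure_nonzero_polynomial_on_lines:
  assumes F: "polynomial_on_lines F" and q: "F q \<noteq> 0"
  shows "p \<in> closure {r. F r \<noteq> 0}"
proof (rule closure_approachable[THEN iffD2], intro allI impI)
  fix e :: real assume "e > 0"
  have "((\<lambda>s. line p (q - p) (of_real s)) \<longlongrightarrow> line p (q - p) (of_real 0)) (at_right 0)"
    unfolding line_def by (intro tendsto_intros)
  then have "\<forall>\<^sub>F s in at_right 0. dist (line p (q - p) (of_real s)) p < e"
    using \<open>e > 0\<close> by (simp add: tendsto_iff)
  moreover have "\<forall>\<^sub>F s in at_right 0. F (line p (q - p) (of_real s)) \<noteq> 0"
    using eventually_nonzero_polynomial_on_lines[OF F, of p "q - p" 1] q by simp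
  ultimately obtain s where "dist (line p (q - p) (of_real s)) p < e" "F (line p (q - p) (of_real s)) \<noteq> 0"
    using eventually_happens'[OF trivial_limit_at_right_real eventually_conj] by blast
  then show "\<exists>r\<in>{r. F r \<noteq> 0}. dist r p < e" by blast
qed

section \<open>Spanning configurations give smooth points\<close>

lemma meas_edge_space: "meas p \<in> edge_space"
  by (simp add: edge_space_def meas_def power2_commute)

lemma continuous_on_meas: "continuous_on S \<gamma> \<Longrightarrow> continuous_on S (\<lambda>t. meas (\<gamma> t))"
  unfolding meas_def by (intro continuous_intros)

lemma polynomial_on_lines_meas: "polynomial_on_lines (\<lambda>p. meas p $k$l)"
  unfolding meas_def power2_eq_square
  by (simp, intro polynomial_on_lines_sum polynomial_on_lines_mult polynomial_on_lines_diff
      polynomial_on_lines_coord finite)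

definition edge_product :: "complex^'d^'n \<Rightarrow> complex" where
  "edge_product p = (\<Prod>k\<in>UNIV. \<Prod>l\<in>UNIV - {k}. meas p $k$l)"

lemma meas_notin_Z_set_iff: "meas p \<notin> Z_set \<longleftrightarrow> edge_product p \<noteq> 0"
  by (auto simp: edge_product_def Z_set_def) metis

lemma polynomial_on_lines_edge_product: "polynomial_on_lines edge_product"
  unfolding edge_product_def by (intro polynomial_on_lines_prod polynomial_on_lines_meas finite)

definition frame_minor :: "'n \<Rightarrow> ('d \<Rightarrow> 'n) \<Rightarrow> complex^'d^'n \<Rightarrow> complex" where
  "frame_minor b a p = det (\<chi> m l. p$(a m)$l - p$b$l)"

definition std_frame :: "('d \<Rightarrow> 'n) \<Rightarrow> complex^'d^'n" where
  "std_frame a = (\<chi> k l. if k = a l then 1 else 0)"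

lemma polynomial_on_lines_frame_minor:
  fixes a :: "'d::finite \<Rightarrow> 'n::finite"
  shows "polynomial_on_lines (frame_minor b a)"
proof -
  have "polynomial_on_lines (\<lambda>p. \<Sum>\<pi> | \<pi> permutes (UNIV::'d set).
      of_int (sign \<pi>) * (\<Prod>i\<in>UNIV. p$(a i)$(\<pi> i) - p$b$(\<pi> i)))"
    by (intro polynomial_on_lines_sum polynomial_on_lines_mult polynomial_on_lines_const
        polynomial_on_lines_prod polynomial_on_lines_diff polynomial_on_lines_coord) auto
  then show ?thesis by (simp add: frame_minor_def[abs_def] det_def)
qed

lemma frame_minor_nonzeroD:
  fixes a :: "'d::finite \<Rightarrow> 'n::finite"
  assumes "frame_minor b a p \<noteq> 0"
  shows "inj a" "b \<notin> range a"
proof -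
  show "inj a"
  proof (rule injI, rule ccontr)
    fix m1 m2 assume "a m1 = a m2" "m1 \<noteq> m2"
    then have "det (\<chi> m l. p$(a m)$l - p$b$l) = 0"
      by (intro det_identical_rows[of m1 m2]) (auto simp: row_def vec_eq_iff)
    then show False using assms by (simp add: frame_minor_def)
  qed
  show "b \<notin> range a"
  proof
    assume "b \<in> range a"
    then obtain m where "b = a m" by blast
    then have "det (\<chi> m l. p$(a m)$l - p$b$l) = 0"
      by (intro det_zero_row(1)[of m]) (auto simp: row_def vec_eq_iff)
    then show False using assms by (simp add: frame_minor_def)
  qed
qed

lemma frame_minor_std_frame:
  fixes a :: "'d::finite \<Rightarrow> 'n::finite"
  assumes "inj a" "b \<notin> range a"
  shows "frame_minor b a (std_frame a) = 1"
proof -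
  have "(\<chi> m l. std_frame a $(a m)$l - std_frame a $b$l) = (mat 1 :: complex^'d^'d)"
    using assms by (auto simp: std_frame_def mat_def vec_eq_iff inj_eq)
  then show ?thesis by (simp add: frame_minor_def det_I)
qed

lemma exists_frame:
  assumes "CARD('d) < CARD('n)"
  obtains b :: "'n::finite" and a :: "'d::finite \<Rightarrow> 'n" where "inj a" "b \<notin> range a"
proof -
  fix b :: 'n
  have "card (UNIV::'d set) \<le> card (UNIV - {b})" using assms by (simp add: card_Diff_singleton)
  then obtain a :: "'d \<Rightarrow> 'n" where "a ` UNIV \<subseteq> UNIV - {b}" "inj a"
    using card_le_inj[of "UNIV::'d set" "UNIV - {b}"] by auto
  then show ?thesis using that by blast
qed

text \<open>The matrix below has rows summing to one and carries std_frame a to p: column a m holds the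
  m-th coordinates of p, column b restores the row sums, and the points outside the frame
  stay fixed.\<close>

definition frame_matrix :: "'n \<Rightarrow> ('d \<Rightarrow> 'n) \<Rightarrow> complex^'d^'n \<Rightarrow> complex^'n^'n" where
  "frame_matrix b a p = (\<chi> k l.
      (if l \<in> range a then p$k$(inv a l) else 0)
    + (if l = b then 1 - (\<Sum>m\<in>UNIV. p$k$m) - (if k \<notin> range a \<and> k \<noteq> b then 1 else 0) else 0)
    + (if k \<notin> range a \<and> k \<noteq> b \<and> l = k then 1 else 0))"

lemma sum_if_range:
  fixes a :: "'d::finite \<Rightarrow> 'n::finite"
  assumes "inj a"
  shows "(\<Sum>l\<in>UNIV. if l \<in> range a then g l else 0) = (\<Sum>m\<in>UNIV. g (a m) :: complex)"
proof -
  have "(\<Sum>l\<in>UNIV. if l \<in> range a then g l else 0) = sum g (range a)"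
    by (simp add: sum.inter_filter[symmetric])
  also have "\<dots> = (\<Sum>m\<in>UNIV. g (a m))" by (simp add: sum.reindex[OF assms])
  finally show ?thesis .
qed

lemma frame_matrix_mult_vec:
  fixes a :: "'d::finite \<Rightarrow> 'n::finite"
  assumes a: "inj a" and b: "b \<notin> range a"
  shows "(frame_matrix b a p *v v)$k
    = v$b + (\<Sum>m\<in>UNIV. p$k$m * (v$(a m) - v$b)) + (if k \<notin> range a \<and> k \<noteq> b then v$k - v$b else 0)"
proof -
  define out where "out \<longleftrightarrow> k \<notin> range a \<and> k \<noteq> b"
  have "(frame_matrix b a p *v v)$k
      = (\<Sum>l\<in>UNIV. (if l \<in> range a then p$k$(inv a l) * v$l else 0)
        + (if l = b then (1 - (\<Sum>m\<in>UNIV. p$k$m) - (if out then 1 else 0)) * v$b else 0)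
        + (if l = k then (if out then v$k else 0) else 0))"
    unfolding frame_matrix_def matrix_vector_mult_def out_def
    by (simp only: vec_lambda_beta) (rule sum.cong; auto simp: distrib_right)
  also have "\<dots> = (\<Sum>m\<in>UNIV. p$k$m * v$(a m))
      + (1 - (\<Sum>m\<in>UNIV. p$k$m) - (if out then 1 else 0)) * v$b + (if out then v$k else 0)"
    using a by (simp only: sum.distrib sum_if_range sum.delta finite UNIV_I if_True inv_f_f)
  also have "\<dots> = v$b + (\<Sum>m\<in>UNIV. p$k$m * (v$(a m) - v$b)) + (if out then v$k - v$b else 0)"
    by (simp add: right_diff_distrib sum_subtractf algebra_simps sum_distrib_left)
  finally show ?thesis unfolding out_def .
qed

lemma frame_matrix_row_sums:
  fixes a :: "'d::finite \<Rightarrow> 'n::finite"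
  assumes "inj a" "b \<notin> range a"
  shows "frame_matrix b a p *v 1 = 1"
  using frame_matrix_mult_vec[OF assms, of p 1] by (simp add: vec_eq_iff)

lemma frame_matrix_std_frame:
  fixes a :: "'d::finite \<Rightarrow> 'n::finite"
  assumes a: "inj a" and b: "b \<notin> range a"
  shows "frame_matrix b a p ** std_frame a = p"
proof -
  have "(\<Sum>l\<in>UNIV. frame_matrix b a p $k$l * std_frame a $l$m) = frame_matrix b a p $k$(a m)" for k m
    by (simp add: std_frame_def if_distrib if_distribR sum.delta cong: if_cong)
  also have "frame_matrix b a p $k$(a m) = p$k$m" for k m
    using a b by (auto simp: frame_matrix_def)
  finally show ?thesis by (simp add: matrix_matrix_mult_def vec_eq_iff)
qed

lemma frame_matrix_left_invertible:
  fixes a :: "'d::finite \<Rightarrow> 'n::finite"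
  assumes nz: "frame_minor b a p \<noteq> 0"
  obtains C where "C ** frame_matrix b a p = mat 1"
proof -
  have a: "inj a" and b: "b \<notin> range a" using frame_minor_nonzeroD[OF nz] by auto
  have "v = 0" if v: "frame_matrix b a p *v v = 0" for v
  proof -
    have row: "v$b + (\<Sum>m\<in>UNIV. p$k$m * (v$(a m) - v$b)) + (if k \<notin> range a \<and> k \<noteq> b then v$k - v$b else 0) = 0"
      for k
      using arg_cong[OF v, of "\<lambda>w. w$k"] frame_matrix_mult_vec[OF a b] by simp
    define Q where "Q = (\<chi> m l. p$(a m)$l - p$b$l)"
    define w where "w = (\<chi> m. v$(a m) - v$b)"
    have frame_rows: "(\<Sum>m\<in>UNIV. p$k$m * (v$(a m) - v$b)) = - v$b" if "k \<in> insert b (range a)" for k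
      using row[of k] that b by (auto simp: eq_neg_iff_add_eq_0 add.commute)
    have "(Q *v w)$m' = 0" for m'
      using frame_rows[of "a m'"] frame_rows[of b]
      by (simp add: Q_def w_def matrix_vector_mult_def left_diff_distrib sum_subtractf)
    then have Qw: "Q *v w = 0" by (simp add: vec_eq_iff)
    have "det Q \<noteq> 0" using nz by (simp add: frame_minor_def Q_def)
    then obtain Q' where "Q' ** Q = mat 1" using invertible_det_nz invertible_left_inverse by blast
    then have "w = Q' *v (Q *v w)" by (simp add: matrix_vector_mul_assoc)
    then have "w = 0" using Qw by simp
    then have va: "v$(a m) = v$b" for m by (simp add: w_def vec_eq_iff)
    then have vb: "v$b = 0" using row[of b] b by simp
    show "v = 0"
    proof (rule vec_eq_iff[THEN iffD2], rule allI)
      fix k show "v$k = 0$k"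
        using row[of k] va vb by (cases "k \<in> range a") (auto split: if_splits)
    qed
  qed
  then show ?thesis using that matrix_left_invertible_ker by blast
qed

lemma zariski_tangent_M_set_subset_edge_space:
  "zariski_tangent (M_set TYPE('d::finite)) z \<subseteq> (edge_space :: (complex^'n^'n) set)"
proof
  fix v :: "complex^'n^'n" assume v: "v \<in> zariski_tangent (M_set TYPE('d)) z"
  have derivative_vanishes: "L v = 0"
    if "bounded_linear L" "L \<in> vanishing_ideal (M_set TYPE('d) :: (complex^'n^'n) set)" for L
    using v that frechet_derivative_at[OF bounded_linear_imp_has_derivative[OF that(1)]]
    by (auto simp: zariski_tangent_def)
  have coord: "bounded_linear (\<lambda>x::complex^'n^'n. x$i$j)" for i j
    by (intro bounded_linear_compose[OF bounded_linear_vec_nth] bounded_linear_vec_nth)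
  have "v$i$i = 0" for i
    by (rule derivative_vanishes[OF coord])
      (auto simp: vanishing_ideal_def M_set_def meas_def intro: poly_fun.coord)
  moreover have "v$i$j - v$j$i = 0" for i j
    by (rule derivative_vanishes[where L = "\<lambda>x. x$i$j - x$j$i", OF bounded_linear_sub[OF coord coord]])
      (auto simp: vanishing_ideal_def M_set_def meas_def power2_commute intro: poly_fun_diff poly_fun.coord)
  ultimately show "v \<in> edge_space" by (simp add: edge_space_def)
qed

lemma dim_zariski_tangent_M_set_le_affine_push:
  fixes B C :: "complex^'n^'n"
  assumes B: "B *v 1 = 1" and CB: "C ** B = mat 1"
  shows "dim (zariski_tangent (M_set TYPE('d::finite)) z)
    \<le> dim (zariski_tangent (M_set TYPE('d)) (affine_push b B z))"
proof -
  have "x = affine_push b C (affine_push b B x)" if "x \<in> zariski_tangent (M_set TYPE('d)) z" for x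
    using affine_push_inverse[OF B CB _, of x b]
      subsetD[OF zariski_tangent_M_set_subset_edge_space[where 'd='d] that] by simp
  then have "inj_on (affine_push b B) (zariski_tangent (M_set TYPE('d)) z)"
    by (metis inj_onI)
  then show ?thesis
    by (rule dim_zariski_tangent_le_image[OF linear_affine_push poly_fun_affine_push affine_push_M_set[OF B]])
qed

lemma dim_zariski_tangent_meas_std_frame:
  fixes a :: "'d::finite \<Rightarrow> 'n::finite"
  assumes nz: "frame_minor b a p \<noteq> 0"
  shows "dim (zariski_tangent (M_set TYPE('d)) (meas p))
    = dim (zariski_tangent (M_set TYPE('d)) (meas (std_frame a)))"
proof -
  have a: "inj a" and b: "b \<notin> range a" using frame_minor_nonzeroD[OF nz] by auto
  define B where "B = frame_matrix b a p"
  obtain C where CB: "C ** B = mat 1" using frame_matrix_left_invertible[OF nz] unfolding B_def by blast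
  have B1: "B *v 1 = 1" unfolding B_def using frame_matrix_row_sums[OF a b] .
  have C1: "C *v 1 = 1" using B1 CB by (metis matrix_vector_mul_assoc matrix_vector_mul_lid)
  have BC: "B ** C = mat 1" using CB matrix_left_right_inverse by blast
  have BN: "B ** std_frame a = p" unfolding B_def using frame_matrix_std_frame[OF a b] .
  then have CP: "C ** p = std_frame a" using CB by (metis matrix_mul_assoc matrix_mul_lid)
  show ?thesis
    using dim_zariski_tangent_M_set_le_affine_push[where 'd='d, OF B1 CB, of "meas (std_frame a)" b]
      dim_zariski_tangent_M_set_le_affine_push[where 'd='d, OF C1 BC, of "meas p" b]
    by (simp add: affine_push_meas[OF B1] affine_push_meas[OF C1] BN CP)
qed

lemma dim_zariski_tangent_meas_eq:
  fixes a a' :: "'d::finite \<Rightarrow> 'n::finite"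
  assumes nz: "frame_minor b a p \<noteq> 0" and nz': "frame_minor b' a' q \<noteq> 0"
  shows "dim (zariski_tangent (M_set TYPE('d)) (meas p)) = dim (zariski_tangent (M_set TYPE('d)) (meas q))"
proof -
  obtain t where t: "frame_minor b a (line p (q - p) t) \<noteq> 0" "frame_minor b' a' (line p (q - p) t) \<noteq> 0"
    using polynomial_on_lines_common_nonzero[OF polynomial_on_lines_frame_minor
        polynomial_on_lines_frame_minor, of b a p "q - p" 0 b' a' 1] nz nz' by auto
  show ?thesis
    using dim_zariski_tangent_meas_std_frame[OF nz] dim_zariski_tangent_meas_std_frame[OF t(1)]
      dim_zariski_tangent_meas_std_frame[OF nz'] dim_zariski_tangent_meas_std_frame[OF t(2)]
    by simp
qed

text \<open>All spanning configurations have the same tangent dimension, and every point of the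
  variety is a limit of such; by upper semicontinuity that common dimension is the minimal one.\<close>

lemma meas_notin_sing_locus:
  fixes a :: "'d::finite \<Rightarrow> 'n::finite"
  assumes nz: "frame_minor b a p \<noteq> 0"
  shows "meas p \<notin> sing_locus (M_set TYPE('d))"
proof -
  let ?T = "zariski_tangent (M_set TYPE('d) :: (complex^'n^'n) set)"
  define t0 where "t0 = dim (?T (meas p))"
  have t0_le: "t0 \<le> dim (?T (meas r))" for r :: "complex^'d^'n"
  proof -
    have "r \<in> closure {q. frame_minor b a q \<noteq> 0}"
      using closure_nonzero_polynomial_on_lines[OF polynomial_on_lines_frame_minor nz] .
    then obtain rs where rs: "\<And>n. frame_minor b a (rs n) \<noteq> 0" "rs \<longlonglongrightarrow> r"
      unfolding closure_sequential by blast
    have "continuous_on UNIV (meas :: complex^'d^'n \<Rightarrow> complex^'n^'n)"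
      unfolding meas_def by (intro continuous_intros)
    then have "isCont meas r" by (simp add: continuous_on_eq_continuous_at)
    then have "(\<lambda>n. meas (rs n)) \<longlonglongrightarrow> meas r" using isCont_tendsto_compose rs(2) by blast
    moreover have "t0 \<le> dim (?T (meas (rs n)))" for n
      unfolding t0_def using dim_zariski_tangent_meas_eq[OF nz rs(1)] by simp
    ultimately show ?thesis by (rule dim_zariski_tangent_limit)
  qed
  have "var_dim (M_set TYPE('d) :: (complex^'n^'n) set) = t0"
    unfolding var_dim_def
  proof (rule Least_equality)
    have "meas p \<in> M_set TYPE('d)" by (simp add: M_set_def)
    then show "\<exists>y\<in>M_set TYPE('d). dim (?T y) = t0" unfolding t0_def by blast
    show "t0 \<le> k" if k: "\<exists>y\<in>M_set TYPE('d). dim (?T y) = k" for k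
    proof -
      obtain r :: "complex^'d^'n" where "dim (?T (meas r)) = k"
        using k unfolding M_set_def by blast
      then show ?thesis using t0_le by blast
    qed
  qed
  then show ?thesis by (simp add: sing_locus_def t0_def)
qed

section \<open>Generic configurations and lifting through the squaring map\<close>

definition generic :: "complex^'d^'n \<Rightarrow> bool" where
  "generic p \<longleftrightarrow> (\<exists>b a. frame_minor b a p \<noteq> 0) \<and> meas p \<notin> Z_set"

lemma good_L_iff:
  "x \<in> good_L TYPE('d::finite) \<longleftrightarrow>
    x \<in> edge_space \<and> sq_map x \<in> M_set TYPE('d) \<and> sq_map x \<notin> bad_M TYPE('d)"
  by (auto simp: good_L_def L_set_def bad_L_def)

lemma good_L_if_generic:
  fixes p :: "complex^'d::finite^'n::finite"
  assumes "generic p" "x \<in> edge_space" "sq_map x = meas p"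
  shows "x \<in> good_L TYPE('d)"
  using assms meas_notin_sing_locus by (auto simp: good_L_iff generic_def bad_M_def M_set_def)

lemma good_L_imp_meas:
  assumes "x \<in> good_L TYPE('d::finite)"
  obtains p :: "complex^'d^'n::finite" where "sq_map x = meas p" "meas p \<notin> Z_set"
  using assms by (auto simp: good_L_iff bad_M_def M_set_def)

lemma path_connected_generic: "path_connected {p :: complex^'d::finite^'n::finite. generic p}"
  unfolding path_connected_component
proof (intro ballI)
  fix p q :: "complex^'d^'n" assume "p \<in> {p. generic p}" "q \<in> {p. generic p}"
  then obtain b a b' a' where p: "frame_minor b a p * edge_product p \<noteq> 0"
      and q: "frame_minor b' a' q * edge_product q \<noteq> 0"
    by (auto simp: generic_def meas_notin_Z_set_iff)
  have F: "polynomial_on_lines (\<lambda>r. frame_minor b a r * edge_product r)"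
    and G: "polynomial_on_lines (\<lambda>r. frame_minor b' a' r * edge_product r)"
    by (intro polynomial_on_lines_mult polynomial_on_lines_frame_minor polynomial_on_lines_edge_product)+
  obtain t where t: "frame_minor b a (line p (q - p) t) * edge_product (line p (q - p) t) \<noteq> 0"
      "frame_minor b' a' (line p (q - p) t) * edge_product (line p (q - p) t) \<noteq> 0"
    using polynomial_on_lines_common_nonzero[OF F G, of p "q - p" 0 1] p q by auto
  have "path_component {r. frame_minor b a r * edge_product r \<noteq> 0} p (line p (q - p) t)"
    and "path_component {r. frame_minor b' a' r * edge_product r \<noteq> 0} (line p (q - p) t) q"
    by (rule path_component_nonzero_polynomial_on_lines[OF F p t(1)],
        rule path_component_nonzero_polynomial_on_lines[OF G t(2) q])
  moreover have "{r. frame_minor b a r * edge_product r \<noteq> 0} \<subseteq> {p. generic p}"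
    "{r. frame_minor b' a' r * edge_product r \<noteq> 0} \<subseteq> {p. generic p}"
    by (auto simp: generic_def meas_notin_Z_set_iff)
  ultimately show "path_component {p. generic p} p q"
    by (meson path_component_of_subset path_component_trans)
qed

lemma continuous_sqrt_unique:
  fixes g h :: "'a::topological_space \<Rightarrow> complex"
  assumes S: "connected S" and g: "continuous_on S g" and h: "continuous_on S h"
    and sq: "\<And>t. t \<in> S \<Longrightarrow> (g t)^2 = (h t)^2" and nz: "\<And>t. t \<in> S \<Longrightarrow> g t \<noteq> 0"
    and a: "a \<in> S" "g a = h a" and t: "t \<in> S"
  shows "g t = h t"
proof -
  define q where "q s = h s / g s" for s
  have "q s \<in> {1, -1}" if "s \<in> S" for s
  proof -
    have "(q s)^2 = (h s)^2 / (g s)^2" by (simp add: q_def power_divide)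
    also have "\<dots> = 1" using nz[OF that] by (simp add: sq[OF that, symmetric])
    finally show ?thesis by (simp add: power2_eq_1_iff)
  qed
  then have "q ` S \<subseteq> {1, -1}" by blast
  then have "finite (q ` S)" by (rule finite_subset) simp
  moreover have "continuous_on S q" unfolding q_def using g h nz by (intro continuous_intros) auto
  ultimately have "q constant_on S" using continuous_finite_range_constant[OF S] by blast
  then have "q t = q a" using a(1) t by (auto simp: constant_on_def)
  then show ?thesis using a(2) nz[OF a(1)] nz[OF t] by (simp add: q_def)
qed

lemma exists_continuous_sqrt:
  fixes f :: "real \<Rightarrow> complex"
  assumes f: "continuous_on {0..1} f" and nz: "\<And>t. t \<in> {0..1} \<Longrightarrow> f t \<noteq> 0" and z: "z^2 = f 0"
  shows "\<exists>g. continuous_on {0..1} g \<and> (\<forall>t\<in>{0..1}. (g t)^2 = f t) \<and> g 0 = z"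
proof -
  obtain g where g: "continuous_on {0..1} g" "\<And>t. t \<in> {0..1} \<Longrightarrow> f t = (g t)^2"
    using continuous_sqrt_on_contractible[OF f convex_imp_contractible[OF convex_real_interval(5)] nz]
    by blast
  have "g 0 \<noteq> 0" using g(2)[of 0] nz[of 0] by auto
  have "(z / g 0)^2 = 1" using z g(2)[of 0] \<open>g 0 \<noteq> 0\<close> by (simp add: power_divide)
  have "continuous_on {0..1} (\<lambda>t. z / g 0 * g t)" using g(1) by (intro continuous_intros)
  moreover have "(z / g 0 * g t)^2 = f t" if "t \<in> {0..1}" for t
    using \<open>(z / g 0)^2 = 1\<close> g(2)[OF that] by (simp only: power_mult_distrib) simp
  moreover have "z / g 0 * g 0 = z" using \<open>g 0 \<noteq> 0\<close> by simp
  ultimately show ?thesis by blast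
qed

lemma exists_continuous_sqrt_coordinates:
  fixes \<mu> :: "real \<Rightarrow> complex^'n^'n"
  assumes \<mu>: "path \<mu>" and edge: "\<And>t. t \<in> {0..1} \<Longrightarrow> \<mu> t \<in> edge_space - Z_set"
    and x: "x \<in> edge_space" and sq: "sq_map x = \<mu> 0"
  obtains G where "\<And>k l. continuous_on {0..1} (G k l)"
    "\<And>k l t. t \<in> {0..1} \<Longrightarrow> (G k l t)^2 = \<mu> t $k$l" "\<And>k l. G k l 0 = x$k$l"
proof -
  have "\<exists>g. continuous_on {0..1} g \<and> (\<forall>t\<in>{0..1}. (g t)^2 = \<mu> t $k$l) \<and> g 0 = x$k$l" for k l
  proof (cases "k = l")
    case True
    then show ?thesis using x edge by (intro exI[of _ "\<lambda>t. 0"]) (auto simp: edge_space_def)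
  next
    case False
    have "continuous_on {0..1} (\<lambda>t. \<mu> t $k$l)" using \<mu> unfolding path_def by (intro continuous_intros)
    moreover have "\<mu> t $k$l \<noteq> 0" if "t \<in> {0..1}" for t using edge[OF that] False by (force simp: Z_set_def)
    moreover have "(x$k$l)^2 = \<mu> 0 $k$l" using sq by (simp add: sq_map_def vec_eq_iff)
    ultimately show ?thesis by (rule exists_continuous_sqrt)
  qed
  then obtain G where "\<And>k l. continuous_on {0..1} (G k l)"
      "\<And>k l t. t \<in> {0..1} \<Longrightarrow> (G k l t)^2 = \<mu> t $k$l" "\<And>k l. G k l 0 = x$k$l"
    by metis
  then show ?thesis using that by blast
qed

lemma lift_path_sq_map:
  fixes \<mu> :: "real \<Rightarrow> complex^'n^'n"
  assumes \<mu>: "path \<mu>" and edge: "\<And>t. t \<in> {0..1} \<Longrightarrow> \<mu> t \<in> edge_space - Z_set"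
    and x: "x \<in> edge_space" and sq: "sq_map x = \<mu> 0"
  obtains \<xi> where "path \<xi>" "\<xi> 0 = x" "\<And>t. t \<in> {0..1} \<Longrightarrow> \<xi> t \<in> edge_space \<and> sq_map (\<xi> t) = \<mu> t"
proof -
  obtain G where G: "\<And>k l. continuous_on {0..1} (G k l)"
      "\<And>k l t. t \<in> {0..1} \<Longrightarrow> (G k l t)^2 = \<mu> t $k$l" "\<And>k l. G k l 0 = x$k$l"
    using exists_continuous_sqrt_coordinates[OF assms] by blast
  have G_sym: "G k l t = G l k t" if t: "t \<in> {0..1}" for k l t
  proof (cases "k = l")
    case False
    show ?thesis
    proof (rule continuous_sqrt_unique[OF connected_Icc G(1) G(1) _ _ _ _ t])
      show "(G k l s)^2 = (G l k s)^2" if "s \<in> {0..1}" for s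
        using G(2)[OF that] edge[OF that] by (simp add: edge_space_def)
      show "G k l s \<noteq> 0" if "s \<in> {0..1}" for s
        using G(2)[OF that, of k l] edge[OF that] False by (force simp: Z_set_def)
      show "G k l 0 = G l k 0" using x G(3) by (simp add: edge_space_def)
    qed simp
  qed simp
  define \<xi> where "\<xi> t = (\<chi> k l. G k l t)" for t
  show ?thesis
  proof
    show "path \<xi>" unfolding path_def \<xi>_def by (intro continuous_on_vec_lambda G(1))
    show "\<xi> 0 = x" by (simp add: \<xi>_def G(3) vec_eq_iff)
    show "\<xi> t \<in> edge_space \<and> sq_map (\<xi> t) = \<mu> t" if "t \<in> {0..1}" for t
    proof -
      have "G k k t = 0" for k using G(2)[OF that, of k k] edge[OF that] by (simp add: edge_space_def)
      then show ?thesis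
        using G(2)[OF that] G_sym[OF that]
        by (simp add: \<xi>_def edge_space_def sq_map_def vec_eq_iff)
    qed
  qed
qed

lemma lift_path_sq_map_coordinate:
  fixes \<xi> \<mu> :: "real \<Rightarrow> complex^'n^'n"
  assumes \<xi>: "path \<xi>" "\<And>t. t \<in> {0..1} \<Longrightarrow> sq_map (\<xi> t) = \<mu> t"
    and nz: "\<And>t. t \<in> {0..1} \<Longrightarrow> \<mu> t $k$l \<noteq> 0"
    and e: "continuous_on {0..1} e" "\<And>t. t \<in> {0..1} \<Longrightarrow> (e t)^2 = \<mu> t $k$l" "e 0 = \<xi> 0 $k$l"
    and t: "t \<in> {0..1}"
  shows "\<xi> t $k$l = e t"
proof (rule continuous_sqrt_unique[where S="{0..1}" and g="\<lambda>t. \<xi> t $k$l" and h=e and a=0])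
  have sq: "(\<xi> s $k$l)^2 = \<mu> s $k$l" if "s \<in> {0..1}" for s
    using \<xi>(2)[OF that] by (auto simp: sq_map_def vec_eq_iff)
  show "continuous_on {0..1} (\<lambda>t. \<xi> t $k$l)" using \<xi>(1) unfolding path_def by (intro continuous_intros)
  show "(\<xi> s $k$l)^2 = (e s)^2" if "s \<in> {0..1}" for s using sq[OF that] e(2)[OF that] by simp
  show "\<xi> s $k$l \<noteq> 0" if "s \<in> {0..1}" for s using sq[OF that] nz[OF that] by auto
qed (use e t in auto)

lemma path_component_good_L_lift:
  fixes \<gamma> :: "real \<Rightarrow> complex^'d::finite^'n::finite"
  assumes \<gamma>: "path \<gamma>" and nZ: "\<And>t. t \<in> {0..1} \<Longrightarrow> meas (\<gamma> t) \<notin> Z_set"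
    and gen: "\<And>t. t \<in> {0<..1} \<Longrightarrow> generic (\<gamma> t)"
    and x: "x \<in> good_L TYPE('d)" and sq: "sq_map x = meas (\<gamma> 0)"
  obtains y where "path_component (good_L TYPE('d)) x y" "y \<in> edge_space" "sq_map y = meas (\<gamma> 1)"
proof -
  have \<mu>: "path (\<lambda>t. meas (\<gamma> t))" using \<gamma> unfolding path_def by (rule continuous_on_meas)
  have edge: "meas (\<gamma> t) \<in> edge_space - Z_set" if "t \<in> {0..1}" for t
    using nZ[OF that] meas_edge_space by blast
  have "x \<in> edge_space" using x by (simp add: good_L_iff)
  then obtain \<xi> where \<xi>: "path \<xi>" "\<xi> 0 = x"
      "\<And>t. t \<in> {0..1} \<Longrightarrow> \<xi> t \<in> edge_space \<and> sq_map (\<xi> t) = meas (\<gamma> t)"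
    using lift_path_sq_map[OF \<mu> edge _ sq] by blast
  have "\<xi> t \<in> good_L TYPE('d)" if "t \<in> {0..1}" for t
  proof (cases "t = 0")
    case False
    then have "generic (\<gamma> t)" using that gen by simp
    then show ?thesis using \<xi>(3)[OF that] good_L_if_generic by blast
  qed (use x \<xi>(2) in simp)
  then have "path_component (good_L TYPE('d)) x (\<xi> 1)"
    unfolding path_component_def using \<xi>(1,2) by (auto simp: path_image_def pathstart_def pathfinish_def)
  then show ?thesis using that \<xi>(3) by simp
qed

lemma path_component_good_L_generic_lift:
  fixes \<gamma> :: "real \<Rightarrow> complex^'d::finite^'n::finite"
  assumes \<gamma>: "path \<gamma>" "path_image \<gamma> \<subseteq> {p. generic p}"
    and x: "x \<in> edge_space" and sq: "sq_map x = meas (\<gamma> 0)"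
  obtains y where "path_component (good_L TYPE('d)) x y" "y \<in> edge_space" "sq_map y = meas (\<gamma> 1)"
proof -
  have gen: "generic (\<gamma> t)" if "t \<in> {0..1}" for t
    using \<gamma>(2) that unfolding path_image_def by blast
  show ?thesis
  proof (rule path_component_good_L_lift[OF \<gamma>(1) _ _ _ sq])
    show "meas (\<gamma> t) \<notin> Z_set" if "t \<in> {0..1}" for t using gen[OF that] by (simp add: generic_def)
    show "generic (\<gamma> t)" if "t \<in> {0<..1}" for t using gen that by simp
    show "x \<in> good_L TYPE('d)" using good_L_if_generic[OF gen x sq] by simp
  qed (use that in blast)
qed

lemma path_component_good_L_generic:
  assumes card: "CARD('d::finite) < CARD('n::finite)" and x: "x \<in> good_L TYPE('d)"
  obtains y and p :: "complex^'d^'n"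
  where "path_component (good_L TYPE('d)) x y" "y \<in> edge_space" "generic p" "sq_map y = meas p"
proof -
  obtain p :: "complex^'d^'n" where p: "sq_map x = meas p" "meas p \<notin> Z_set"
    using good_L_imp_meas[OF x] by blast
  obtain b :: 'n and a :: "'d \<Rightarrow> 'n" where "inj a" "b \<notin> range a" using exists_frame[OF card] .
  define v where "v = std_frame a - p"
  have "\<forall>\<^sub>F s in at_right 0. frame_minor b a (line p v (of_real s)) \<noteq> 0"
    using eventually_nonzero_polynomial_on_lines[OF polynomial_on_lines_frame_minor, of b a p v 1]
      frame_minor_std_frame[OF \<open>inj a\<close> \<open>b \<notin> range a\<close>] by (simp add: v_def)
  moreover have "\<forall>\<^sub>F s in at_right 0. edge_product (line p v (of_real s)) \<noteq> 0"
    using eventually_nonzero_polynomial_on_lines[OF polynomial_on_lines_edge_product, of p v 0] p(2)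
    by (simp add: meas_notin_Z_set_iff)
  ultimately have "\<forall>\<^sub>F s in at_right 0. generic (line p v (of_real s))"
    by eventually_elim (auto simp: generic_def meas_notin_Z_set_iff)
  then obtain e where e: "e > 0" "\<And>s. 0 < s \<Longrightarrow> s < e \<Longrightarrow> generic (line p v (of_real s))"
    unfolding eventually_at_right_field by blast
  define \<gamma> where "\<gamma> t = line p v (of_real (e / 2 * t))" for t
  have "path \<gamma>" unfolding path_def \<gamma>_def line_def by (intro continuous_intros)
  moreover have gen: "generic (\<gamma> t)" if "t \<in> {0<..1}" for t
    unfolding \<gamma>_def by (rule e(2)) (use e(1) that in auto)
  moreover have "meas (\<gamma> t) \<notin> Z_set" if "t \<in> {0..1}" for t
  proof (cases "t = 0")
    case True then show ?thesis using p(2) by (simp add: \<gamma>_def)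
  next
    case False then show ?thesis using gen[of t] that by (simp add: generic_def)
  qed
  moreover have "sq_map x = meas (\<gamma> 0)" using p(1) by (simp add: \<gamma>_def)
  ultimately obtain y where "path_component (good_L TYPE('d)) x y" "y \<in> edge_space" "sq_map y = meas (\<gamma> 1)"
    using path_component_good_L_lift[OF _ _ _ x] by blast
  then show ?thesis using that gen[of 1] by simp
qed

section \<open>Flipping signs\<close>

definition flip_edge :: "'n \<Rightarrow> 'n \<Rightarrow> complex^'n^'n \<Rightarrow> complex^'n^'n" where
  "flip_edge i j x = (\<chi> k l. if {k, l} = {i, j} then - x$k$l else x$k$l)"

lemma flip_edge_edge_space: "x \<in> edge_space \<Longrightarrow> flip_edge i j x \<in> edge_space"
  by (auto simp: flip_edge_def edge_space_def insert_commute)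

lemma sq_map_flip_edge: "sq_map (flip_edge i j x) = sq_map x"
  by (simp add: flip_edge_def sq_map_def vec_eq_iff)

lemma flip_edge_good_L: "x \<in> good_L TYPE('d::finite) \<Longrightarrow> flip_edge i j x \<in> good_L TYPE('d)"
  by (simp add: good_L_iff flip_edge_edge_space sq_map_flip_edge)

lemma continuous_on_flip_edge: "continuous_on S (flip_edge i j)"
  unfolding flip_edge_def
proof (intro continuous_on_vec_lambda)
  fix k l
  show "continuous_on S (\<lambda>x. if {k, l} = {i, j} then - x$k$l else x$k$l)"
    by (cases "{k, l} = {i, j}") (auto intro!: continuous_intros)
qed

lemma path_component_flip_edge:
  assumes "path_component (good_L TYPE('d::finite)) x y"
  shows "path_component (good_L TYPE('d)) (flip_edge i j x) (flip_edge i j y)"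
proof -
  obtain g where g: "path g" "path_image g \<subseteq> good_L TYPE('d)" "pathstart g = x" "pathfinish g = y"
    using assms unfolding path_component_def by blast
  have "path (flip_edge i j \<circ> g)" using g(1) by (intro path_continuous_image continuous_on_flip_edge)
  moreover have "path_image (flip_edge i j \<circ> g) \<subseteq> good_L TYPE('d)"
    using g(2) flip_edge_good_L by (auto simp: path_image_def)
  ultimately show ?thesis
    unfolding path_component_def using g(3,4) by (auto simp: pathstart_def pathfinish_def)
qed

text \<open>A loop of generic configurations along which the squared distance of the points i and j
  winds once around 0 while all other squared distances keep a positive real part. The point i
  moves as (e_d0 + s e_d1) / 10 with s = \<i> + e^(2 \<pi> \<i> \<theta>), so that its squared distance to the
  point j at the origin is e^(2 \<pi> \<i> \<theta>) (2 \<i> + e^(2 \<pi> \<i> \<theta>)) / 100. The points of the frame sit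
  at the unit vectors and all others at distinct distances at least 2 on the d0-axis.\<close>

locale sign_flip_loop =
  fixes i j :: "'n::finite" and frame :: "'d::finite \<Rightarrow> 'n" and d0 d1 :: 'd and rank :: "'n \<Rightarrow> nat"
  assumes inj_frame: "inj frame" and i_notin_frame: "i \<notin> range frame"
    and j_notin_frame: "j \<notin> range frame" and i_neq_j: "i \<noteq> j" and d0_neq_d1: "d0 \<noteq> d1"
    and inj_rank: "inj rank"
begin

definition axis :: "'n \<Rightarrow> 'd" where
  "axis k = (if k \<in> range frame then inv frame k else d0)"

definition radius :: "'n \<Rightarrow> real" where
  "radius k = (if k \<in> range frame then 1 else 2 + real (rank k))"

definition still :: "'n \<Rightarrow> 'd \<Rightarrow> real" where
  "still k m = (if k = i \<or> k = j then 0 else if m = axis k then radius k else 0)"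

definition slope :: "real \<Rightarrow> complex" where
  "slope \<theta> = \<i> + cis (2 * pi * \<theta>)"

definition moving :: "real \<Rightarrow> 'd \<Rightarrow> complex" where
  "moving \<theta> m = (if m = d0 then 1 else if m = d1 then slope \<theta> else 0) / 10"

definition loop :: "real \<Rightarrow> complex^'d^'n" where
  "loop \<theta> = (\<chi> k m. if k = i then moving \<theta> m else complex_of_real (still k m))"

definition root :: "real \<Rightarrow> complex" where
  "root \<theta> = cis (pi * \<theta>) * csqrt (2 * \<i> + cis (2 * pi * \<theta>)) / 10"

lemma path_loop: "path loop"
  unfolding path_def loop_def moving_def slope_def
proof (intro continuous_on_vec_lambda)
  fix k m
  show "continuous_on {0..1} (\<lambda>\<theta>. if k = i then (if m = d0 then 1 else if m = d1
      then \<i> + cis (2 * pi * \<theta>) else 0) / 10 else complex_of_real (still k m))"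
    by (cases "k = i"; cases "m = d0"; cases "m = d1") (auto intro!: continuous_intros)
qed

lemma loop_closed: "loop 1 = loop 0"
proof -
  have "moving 1 = moving 0" by (simp add: moving_def slope_def cis.ctr fun_eq_iff)
  then show ?thesis by (simp add: loop_def vec_eq_iff)
qed

lemma Im_winding_factor: "Im (2 * \<i> + cis (2 * pi * \<theta>)) \<ge> 1"
  using sin_ge_minus_one[of "2 * pi * \<theta>"] by (simp; linarith)

lemma continuous_on_root: "continuous_on S root"
proof -
  have "continuous_on S (\<lambda>\<theta>. csqrt (2 * \<i> + cis (2 * pi * \<theta>)))"
  proof (rule continuous_on_compose2[OF continuous_on_csqrt])
    show "continuous_on S (\<lambda>\<theta>. 2 * \<i> + cis (2 * pi * \<theta>))" by (intro continuous_intros)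
    show "(\<lambda>\<theta>. 2 * \<i> + cis (2 * pi * \<theta>)) ` S \<subseteq> - \<real>\<^sub>\<le>\<^sub>0"
    proof
      fix z assume "z \<in> (\<lambda>\<theta>. 2 * \<i> + cis (2 * pi * \<theta>)) ` S"
      then have "Im z \<ge> 1" using Im_winding_factor by auto
      then show "z \<in> - \<real>\<^sub>\<le>\<^sub>0" by (auto simp: complex_nonpos_Reals_iff)
    qed
  qed
  then show ?thesis unfolding root_def by (intro continuous_intros) auto
qed

lemma root_nonzero: "root \<theta> \<noteq> 0"
proof -
  have "2 * \<i> + cis (2 * pi * \<theta>) \<noteq> 0" using Im_winding_factor[of \<theta>] by force
  then show ?thesis by (simp add: root_def)
qed

lemma root_1: "root 1 = - root 0"
  by (simp add: root_def)

lemma loop_j: "loop \<theta> $j$m = 0"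
  using i_neq_j by (simp add: loop_def still_def)

lemma sum_moving_squares: "(\<Sum>m\<in>UNIV. (moving \<theta> m)^2) = (1 + (slope \<theta>)^2) / 100"
proof -
  have "(\<Sum>m\<in>UNIV. (moving \<theta> m)^2) = (\<Sum>m\<in>UNIV. (if m = d0 then 1 / 100 else 0) + (if m = d1 then (slope \<theta>)^2 / 100 else 0))"
    using d0_neq_d1 by (intro sum.cong) (auto simp: moving_def power_divide)
  then show ?thesis by (simp add: sum.distrib add_divide_distrib)
qed

lemma meas_loop_edge:
  assumes "{k, l} = {i, j}"
  shows "meas (loop \<theta>) $k$l = (root \<theta>)^2"
proof -
  have "meas (loop \<theta>) $i$j = (1 + (slope \<theta>)^2) / 100"
    using sum_moving_squares loop_j by (simp add: meas_def loop_def)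
  also have "1 + (slope \<theta>)^2 = (cis (pi * \<theta>))^2 * (2 * \<i> + cis (2 * pi * \<theta>))"
    by (simp add: slope_def power2_eq_square cis_mult algebra_simps)
  finally have "meas (loop \<theta>) $i$j = (root \<theta>)^2" by (simp add: root_def power_mult_distrib power_divide)
  then show ?thesis
    using assms meas_edge_space[of "loop \<theta>"] by (auto simp: edge_space_def doubleton_eq_iff)
qed

lemma still_distinct:
  assumes "k \<noteq> l" "k \<noteq> i" "l \<noteq> i"
  obtains m where "still k m \<noteq> still l m"
proof -
  have radius_ge: "radius k \<ge> 1" for k by (simp add: radius_def)
  have still_axis: "still k (axis k) = radius k" if "k \<noteq> i" "k \<noteq> j" for k
    using that by (simp add: still_def)
  have "\<exists>m. still k m \<noteq> still l m" if kl: "k \<noteq> l" "k \<noteq> i" "l \<noteq> i" "k \<noteq> j" for k l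
  proof (cases "l = j \<or> axis k \<noteq> axis l")
    case True
    then have "still l (axis k) = 0" using kl by (auto simp: still_def)
    then show ?thesis using still_axis[OF kl(2,4)] radius_ge[of k] by (metis not_one_le_zero)
  next
    case False
    have "radius k \<noteq> radius l"
    proof (cases "k \<in> range frame"; cases "l \<in> range frame")
      assume "k \<in> range frame" "l \<in> range frame"
      then show ?thesis using False kl(1) by (auto simp: axis_def dest: inv_into_injective)
    next
      assume "k \<notin> range frame" "l \<notin> range frame"
      then show ?thesis using inj_rank kl(1) by (auto simp: radius_def inj_eq)
    qed (auto simp: radius_def)
    then show ?thesis using still_axis[OF kl(2,4)] still_axis[OF kl(3)] False by metis
  qed
  then show ?thesis using assms that by (metis (full_types))
qed

lemma Re_meas_loop_still:
  assumes "k \<noteq> l" "k \<noteq> i" "l \<noteq> i"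
  shows "Re (meas (loop \<theta>) $k$l) > 0"
proof -
  obtain m0 where "still k m0 \<noteq> still l m0" using still_distinct[OF assms] .
  then have "(\<Sum>m\<in>UNIV. (still k m - still l m)^2) > 0" by (intro sum_pos2[of UNIV m0]) auto
  moreover have "meas (loop \<theta>) $k$l = complex_of_real (\<Sum>m\<in>UNIV. (still k m - still l m)^2)"
    using assms by (simp add: meas_def loop_def)
  ultimately show ?thesis by simp
qed

lemma norm_slope: "norm (slope \<theta>) \<le> 2"
  using norm_triangle_ineq[of \<i> "cis (2 * pi * \<theta>)"] by (simp add: slope_def)

lemma Re_meas_loop_moving:
  assumes "l \<noteq> i" "l \<noteq> j"
  shows "Re (meas (loop \<theta>) $i$l) > 0"
proof -
  define L where "L = radius l"
  have L: "L \<ge> 1" by (simp add: L_def radius_def)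
  have "meas (loop \<theta>) $i$l = (\<Sum>m\<in>UNIV. (moving \<theta> m - (if m = axis l then of_real L else 0))^2)"
    using assms by (simp add: meas_def loop_def still_def L_def if_distrib cong: if_cong)
  also have "\<dots> = (\<Sum>m\<in>UNIV. (moving \<theta> m)^2 + (if m = axis l then (of_real L)^2 - 2 * of_real L * moving \<theta> m else 0))"
    by (intro sum.cong) (auto simp: power2_eq_square algebra_simps)
  also have "\<dots> = (1 + (slope \<theta>)^2) / 100 + (of_real L)^2 - 2 * of_real L * moving \<theta> (axis l)"
    by (simp add: sum.distrib sum_moving_squares)
  finally have eq: "Re (meas (loop \<theta>) $i$l) = Re ((1 + (slope \<theta>)^2) / 100) + L^2 - 2 * L * Re (moving \<theta> (axis l))"
    by simp
  have "norm ((1 + (slope \<theta>)^2) / 100) \<le> 5 / 100"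
    using norm_triangle_ineq[of 1 "(slope \<theta>)^2"] norm_slope[of \<theta>] power_mono[of "norm (slope \<theta>)" 2 2]
    by (simp add: norm_divide norm_power)
  then have "Re ((1 + (slope \<theta>)^2) / 100) \<ge> - 5 / 100"
    using abs_Re_le_cmod[of "(1 + (slope \<theta>)^2) / 100"] by linarith
  moreover have "norm (moving \<theta> (axis l)) \<le> 2 / 10"
    using norm_slope[of \<theta>] by (simp add: moving_def norm_divide)
  then have "Re (moving \<theta> (axis l)) \<le> 2 / 10"
    using abs_Re_le_cmod[of "moving \<theta> (axis l)"] by linarith
  then have "2 * L * Re (moving \<theta> (axis l)) \<le> 4 / 10 * L" using L by (simp add: mult_left_mono)
  moreover have "L^2 \<ge> L" using L by (simp add: power2_eq_square)
  ultimately show ?thesis using eq L by linarith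
qed

lemma Re_meas_loop:
  assumes "k \<noteq> l" "{k, l} \<noteq> {i, j}"
  shows "Re (meas (loop \<theta>) $k$l) > 0"
proof -
  have sym: "meas (loop \<theta>) $k$l = meas (loop \<theta>) $l$k"
    using meas_edge_space[of "loop \<theta>"] by (simp add: edge_space_def)
  consider "k = i" "l \<noteq> j" | "l = i" "k \<noteq> j" | "k \<noteq> i" "l \<noteq> i"
    using assms by auto
  then show ?thesis
  proof cases
    case 1
    then show ?thesis using Re_meas_loop_moving[of l] assms(1) by simp
  next
    case 2
    then show ?thesis using Re_meas_loop_moving[of k] assms(1) sym by simp
  next
    case 3
    then show ?thesis using Re_meas_loop_still assms(1) by simp
  qed
qed

lemma generic_loop: "generic (loop \<theta>)"
  unfolding generic_def
proof
  have "(\<chi> m l. loop \<theta> $(frame m)$l - loop \<theta> $j$l) = (mat 1 :: complex^'d^'d)"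
    using i_notin_frame j_notin_frame inj_frame i_neq_j
    by (auto simp: loop_def still_def axis_def radius_def mat_def vec_eq_iff)
  then have "frame_minor j frame (loop \<theta>) = 1" by (simp add: frame_minor_def det_I)
  then show "\<exists>b a. frame_minor b a (loop \<theta>) \<noteq> 0" by (metis one_neq_zero)
  have "meas (loop \<theta>) $k$l \<noteq> 0" if "k \<noteq> l" for k l
  proof (cases "{k, l} = {i, j}")
    case True
    then show ?thesis using meas_loop_edge root_nonzero by simp
  next
    case False
    then show ?thesis using Re_meas_loop[OF that False] by (metis zero_complex.sel(1) less_irrefl)
  qed
  then show "meas (loop \<theta>) \<notin> Z_set" by (auto simp: Z_set_def)
qed

lemma continuous_on_csqrt_meas_loop:
  assumes "k \<noteq> l" "{k, l} \<noteq> {i, j}"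
  shows "continuous_on {0..1} (\<lambda>t. csqrt (meas (loop t) $k$l))"
proof (rule continuous_on_compose2[OF continuous_on_csqrt, of _ "\<lambda>t. meas (loop t) $k$l"])
  have "continuous_on {0..1} (\<lambda>t. meas (loop t))"
    using path_loop unfolding path_def by (rule continuous_on_meas)
  then show "continuous_on {0..1} (\<lambda>t. meas (loop t) $k$l)" by (intro continuous_intros)
  show "(\<lambda>t. meas (loop t) $k$l) ` {0..1} \<subseteq> - \<real>\<^sub>\<le>\<^sub>0"
  proof
    fix z assume "z \<in> (\<lambda>t. meas (loop t) $k$l) ` {0..1}"
    then have "Re z > 0" using Re_meas_loop[OF assms] by auto
    then show "z \<in> - \<real>\<^sub>\<le>\<^sub>0" by (auto simp: complex_nonpos_Reals_iff)
  qed
qed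

text \<open>Lifting the loop from y ends at y with the sign of its (i,j) coordinate flipped: along the
  loop that coordinate follows the continuous square root root, which changes sign, while every
  other coordinate follows the principal square root, which is continuous there.\<close>

lemma path_component_flip_edge_loop:
  assumes y: "y \<in> edge_space" "sq_map y = meas (loop 0)"
  shows "path_component (good_L TYPE('d)) y (flip_edge i j y)"
proof -
  define \<mu> where "\<mu> t = meas (loop t)" for t
  have "path \<mu>" using path_loop unfolding path_def \<mu>_def by (rule continuous_on_meas)
  moreover have "\<mu> t \<in> edge_space - Z_set" for t
    using generic_loop[of t] meas_edge_space by (auto simp: \<mu>_def generic_def)
  ultimately obtain \<xi> where \<xi>: "path \<xi>" "\<xi> 0 = y"
      "\<And>t. t \<in> {0..1} \<Longrightarrow> \<xi> t \<in> edge_space \<and> sq_map (\<xi> t) = \<mu> t"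
    using lift_path_sq_map[OF _ _ y(1)] y(2) unfolding \<mu>_def by blast
  have "\<xi> t \<in> good_L TYPE('d)" if "t \<in> {0..1}" for t
    using good_L_if_generic[OF generic_loop] \<xi>(3)[OF that] by (simp add: \<mu>_def)
  then have component: "path_component (good_L TYPE('d)) y (\<xi> 1)"
    unfolding path_component_def using \<xi>(1,2) by (auto simp: path_image_def pathstart_def pathfinish_def)
  have \<mu>_nz: "\<mu> t $k$l \<noteq> 0" if "k \<noteq> l" for t k l
    using generic_loop[of t] that by (auto simp: \<mu>_def generic_def Z_set_def)
  have y_sq: "(y$k$l)^2 = \<mu> 0 $k$l" for k l
    using y(2) by (simp add: \<mu>_def sq_map_def vec_eq_iff)
  have \<xi>_sq: "sq_map (\<xi> t) = \<mu> t" if "t \<in> {0..1}" for t using \<xi>(3)[OF that] by simp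
  note endpoint = lift_path_sq_map_coordinate[OF \<xi>(1) \<xi>_sq, of _ _ _ 1]
  have "\<xi> 1 $k$l = flip_edge i j y $k$l" for k l
  proof (cases "k = l")
    case True
    then show ?thesis using \<xi>(3)[of 1] y(1) by (simp add: edge_space_def flip_edge_def)
  next
    case kl: False
    show ?thesis
    proof (cases "{k, l} = {i, j}")
      case True
      then have "\<xi> 1 $k$l = y$k$l / root 0 * root 1"
        using root_nonzero y_sq[of k l] \<xi>(2) meas_loop_edge[OF True] \<mu>_nz[OF kl]
        by (intro endpoint) (auto intro!: continuous_intros continuous_on_root
            simp: \<mu>_def power_mult_distrib power_divide)
      then show ?thesis using True root_1 root_nonzero by (simp add: flip_edge_def)
    next
      case False
      have "\<xi> 1 $k$l = y$k$l / csqrt (\<mu> 0 $k$l) * csqrt (\<mu> 1 $k$l)"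
        using \<mu>_nz[OF kl] y_sq[of k l] \<xi>(2) continuous_on_csqrt_meas_loop[OF kl False]
        by (intro endpoint) (auto intro!: continuous_intros
            simp: \<mu>_def power_mult_distrib power_divide)
      then show ?thesis using False \<mu>_nz[OF kl, of 0] loop_closed by (simp add: flip_edge_def \<mu>_def)
    qed
  qed
  then have "\<xi> 1 = flip_edge i j y" by (simp add: vec_eq_iff)
  then show ?thesis using component by simp
qed
end

lemma exists_sign_flip_loop:
  fixes i j :: "'n::finite"
  assumes d: "2 \<le> CARD('d)" and n: "CARD('d) + 2 \<le> CARD('n)" and ij: "i \<noteq> j"
  obtains frame :: "'d::finite \<Rightarrow> 'n" and d0 d1 :: 'd and rank :: "'n \<Rightarrow> nat"
  where "sign_flip_loop i j frame d0 d1 rank"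
proof -
  have "card (UNIV::'d set) \<le> card (UNIV - {i, j})" using ij n by (simp add: card_Diff_subset)
  then obtain frame :: "'d \<Rightarrow> 'n" where frame: "range frame \<subseteq> UNIV - {i, j}" "inj frame"
    using card_le_inj[of "UNIV::'d set" "UNIV - {i, j}"] by auto
  fix d0 :: 'd
  have "card (UNIV - {d0}) \<ge> 1" using d by (simp add: card_Diff_singleton)
  then obtain d1 where "d1 \<in> UNIV - {d0}" by (metis all_not_in_conv card.empty not_one_le_zero)
  then have "d0 \<noteq> d1" by blast
  moreover obtain rank :: "'n \<Rightarrow> nat" where "inj rank"
    using finite_imp_inj_to_nat_seg[of "UNIV::'n set"] by auto
  moreover have "i \<notin> range frame" "j \<notin> range frame" using frame(1) by auto
  ultimately show ?thesis
    using that frame(2) ij unfolding sign_flip_loop_def by blast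
qed

lemma path_component_flip_edge_generic:
  fixes p :: "complex^'d::finite^'n::finite"
  assumes d: "2 \<le> CARD('d)" and n: "CARD('d) + 2 \<le> CARD('n)" and ij: "i \<noteq> j"
    and x: "x \<in> edge_space" and p: "generic p" and sq: "sq_map x = meas p"
  shows "path_component (good_L TYPE('d)) x (flip_edge i j x)"
proof -
  obtain frame :: "'d \<Rightarrow> 'n" and d0 d1 rank where "sign_flip_loop i j frame d0 d1 rank"
    using exists_sign_flip_loop[OF d n ij] .
  then interpret sign_flip_loop i j frame d0 d1 rank .
  obtain \<gamma> where \<gamma>: "path \<gamma>" "path_image \<gamma> \<subseteq> {p. generic p}" "pathstart \<gamma> = p" "pathfinish \<gamma> = loop 0"
    using path_connected_generic generic_loop p unfolding path_connected_def by blast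
  have "sq_map x = meas (\<gamma> 0)" and \<gamma>1: "\<gamma> 1 = loop 0"
    using sq \<gamma>(3,4) by (simp_all add: pathstart_def pathfinish_def)
  then obtain y where y: "path_component (good_L TYPE('d)) x y" "y \<in> edge_space" "sq_map y = meas (\<gamma> 1)"
    using path_component_good_L_generic_lift[OF \<gamma>(1,2) x] by blast
  have "path_component (good_L TYPE('d)) y (flip_edge i j y)"
    using path_component_flip_edge_loop[OF y(2)] y(3) \<gamma>1 by simp
  moreover have "path_component (good_L TYPE('d)) (flip_edge i j y) (flip_edge i j x)"
    using path_component_flip_edge[OF path_component_sym[OF y(1)]] .
  ultimately show ?thesis using y(1) by (meson path_component_trans)
qed

lemma flip_edge_fewer_disagreements:
  assumes x: "x \<in> edge_space" and y: "y \<in> edge_space" and differ: "x$i$j \<noteq> y$i$j"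
    and y_ij: "y$i$j = - x$i$j"
  shows "{(k, l). flip_edge i j x $k$l \<noteq> y$k$l} \<subset> {(k, l). x$k$l \<noteq> y$k$l}"
proof -
  have "flip_edge i j x $k$l = y$k$l" if "{k, l} = {i, j}" for k l
    using that y_ij x y by (auto simp: flip_edge_def edge_space_def doubleton_eq_iff)
  then have "{(k, l). flip_edge i j x $k$l \<noteq> y$k$l} \<subseteq> {(k, l). x$k$l \<noteq> y$k$l}"
    by (auto simp: flip_edge_def)
  moreover have "flip_edge i j x $i$j = y$i$j" using y_ij by (simp add: flip_edge_def)
  ultimately show ?thesis using differ by blast
qed

lemma path_component_same_sq_map:
  fixes p :: "complex^'d::finite^'n::finite"
  assumes d: "2 \<le> CARD('d)" and n: "CARD('d) + 2 \<le> CARD('n)" and p: "generic p"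
    and y: "y \<in> edge_space" "sq_map y = meas p"
  shows "x \<in> edge_space \<Longrightarrow> sq_map x = meas p \<Longrightarrow> path_component (good_L TYPE('d)) x y"
proof (induction "card {(k, l). x$k$l \<noteq> y$k$l}" arbitrary: x rule: less_induct)
  case less
  show ?case
  proof (cases "x = y")
    case True
    then show ?thesis using good_L_if_generic[OF p y] by (simp add: path_component_refl)
  next
    case False
    then obtain i j where differ: "x$i$j \<noteq> y$i$j" by (auto simp: vec_eq_iff)
    have ij: "i \<noteq> j" using differ less.prems(1) y(1) by (auto simp: edge_space_def)
    have "(x$i$j)^2 = (y$i$j)^2"
      using less.prems(2) y(2) by (simp add: sq_map_def vec_eq_iff)
    then have "y$i$j = - x$i$j" using differ by (simp add: power2_eq_iff)
    then have "card {(k, l). flip_edge i j x $k$l \<noteq> y$k$l} < card {(k, l). x$k$l \<noteq> y$k$l}"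
      using flip_edge_fewer_disagreements[OF less.prems(1) y(1) differ] by (intro psubset_card_mono) simp_all
    moreover have "flip_edge i j x \<in> edge_space" "sq_map (flip_edge i j x) = meas p"
      using flip_edge_edge_space[OF less.prems(1)] less.prems(2) by (simp_all add: sq_map_flip_edge)
    ultimately have "path_component (good_L TYPE('d)) (flip_edge i j x) y" using less.hyps by blast
    moreover have "path_component (good_L TYPE('d)) x (flip_edge i j x)"
      by (rule path_component_flip_edge_generic[OF d n ij less.prems(1) p less.prems(2)])
    ultimately show ?thesis by (meson path_component_trans)
  qed
qed

theorem lemma2p19:
  assumes "CARD('d::finite) \<ge> 2"
    and "CARD('n::finite) \<ge> CARD('d) + 2"
  shows "path_connected (good_L TYPE('d) :: (complex^'n^'n) set)"
  unfolding path_connected_component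
proof (intro ballI)
  fix x y :: "complex^'n^'n" assume x: "x \<in> good_L TYPE('d)" and y: "y \<in> good_L TYPE('d)"
  have card: "CARD('d) < CARD('n)" using assms(2) by simp
  obtain x' and p :: "complex^'d^'n" where x': "path_component (good_L TYPE('d)) x x'" "x' \<in> edge_space" "generic p"
      "sq_map x' = meas p"
    using path_component_good_L_generic[OF card x] by blast
  obtain y' and q :: "complex^'d^'n" where y': "path_component (good_L TYPE('d)) y y'" "y' \<in> edge_space" "generic q"
      "sq_map y' = meas q"
    using path_component_good_L_generic[OF card y] by blast
  obtain \<gamma> where \<gamma>: "path \<gamma>" "path_image \<gamma> \<subseteq> {p. generic p}" "pathstart \<gamma> = p" "pathfinish \<gamma> = q"
    using path_connected_generic x'(3) y'(3) unfolding path_connected_def by blast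
  have "sq_map x' = meas (\<gamma> 0)" "\<gamma> 1 = q"
    using x'(4) \<gamma>(3,4) by (simp_all add: pathstart_def pathfinish_def)
  then obtain x'' where x'': "path_component (good_L TYPE('d)) x' x''" "x'' \<in> edge_space" "sq_map x'' = meas q"
    using path_component_good_L_generic_lift[OF \<gamma>(1,2) x'(2)] by blast
  have "path_component (good_L TYPE('d)) x'' y'"
    using path_component_same_sq_map[OF assms y'(3) y'(2,4) x''(2,3)] .
  then have "path_component (good_L TYPE('d)) x y'"
    using path_component_trans[OF path_component_trans[OF x'(1) x''(1)]] by blast
  then show "path_component (good_L TYPE('d)) x y"
    by (rule path_component_trans[OF _ path_component_sym[OF y'(1)]])
qed

end
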